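(* Let $\mathcal J$ be the real vector space of polynomial maps $\mathbb R^2\to\mathbb R^2$ of degree $\le 4$ with vanishing constant term, and let $\mathcal J^1\subset\mathcal J$ be the subset of those elements whose linear term has rank exactly $1$. Let $G$ be the group of polynomial maps $\mathbb R^2\to\mathbb R^2$ of degree $\le4$ with vanishing constant term and invertible linear term, with group law given by composition followed by truncation to degree $\le 4$. Let $N\subset\mathcal J^1$ be the submanifold of those $f$ of the form $f(x,y)=(x,f_2(x,y))$ where $f_2$ has vanishing constant and linear terms. Then the map $$G\times N\times G\to\mathcal J^1,\qquad (\varphi,f,\psi)\mapsto \varphi\circ f\circ\psi\ \text{(truncated to degree}\le 4),$$ is a (smooth) fiber bundle.
   Context: Composition of polynomial maps with vanishing constant terms is always followed by truncation to degree $\le 4$. The group $G\times G^{op}$ acts on $\mathcal J$ by $(\varphi,\psi)\cdot f=\varphi f\psi$. *)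

theory Defs
  imports "HOL-Analysis.Analysis"
begin

text \<open>Iterated directional (Frechet) derivatives: all of them exist and are continuous
  on the open set U iff f is C-infinity on U.\<close>
fun Cdir :: "'a::real_normed_vector list \<Rightarrow> 'a set \<Rightarrow> ('a \<Rightarrow> 'b::real_normed_vector) \<Rightarrow> bool" where
  "Cdir [] U f = continuous_on U f"
| "Cdir (v # vs) U f =
     ((\<forall>x\<in>U. f differentiable (at x)) \<and> Cdir vs U (\<lambda>x. frechet_derivative f (at x) v))"

definition smooth_on :: "'a::real_normed_vector set \<Rightarrow> ('a \<Rightarrow> 'b::real_normed_vector) \<Rightarrow> bool" where
  "smooth_on U f \<longleftrightarrow> open U \<and> (\<forall>vs. Cdir vs U f)"

definition smooth_map :: "'a::real_normed_vector set \<Rightarrow> ('a \<Rightarrow> 'b::real_normed_vector) \<Rightarrow> bool" where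
  "smooth_map S f \<longleftrightarrow>
     (\<forall>x\<in>S. \<exists>U g. open U \<and> x \<in> U \<and> smooth_on U g \<and> (\<forall>y\<in>S \<inter> U. g y = f y))"

definition diffeo_betw :: "'a::real_normed_vector set \<Rightarrow> 'b::real_normed_vector set \<Rightarrow> ('a \<Rightarrow> 'b) \<Rightarrow> bool" where
  "diffeo_betw S T h \<longleftrightarrow> bij_betw h S T \<and> smooth_map S h \<and> smooth_map T (inv_into S h)"

text \<open>The fibre is taken inside the ambient space of E
  (no loss of generality: it is diffeomorphic to a fibre of \<pi>).\<close>
definition fiber_bundle :: "'a::euclidean_space set \<Rightarrow> 'b::euclidean_space set \<Rightarrow> ('a \<Rightarrow> 'b) \<Rightarrow> bool" where
  "fiber_bundle E B p \<longleftrightarrow>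
     p ` E = B \<and> smooth_map E p \<and>
     (\<forall>b\<in>B. \<exists>U (F::'a set) h.
        openin (top_of_set B) U \<and> b \<in> U \<and>
        diffeo_betw (E \<inter> p -` U) (U \<times> F) h \<and>
        (\<forall>e\<in>E \<inter> p -` U. fst (h e) = p e))"

text \<open>Index (c,i,j): coefficient of x^i y^j in the component c (c = 0 or 1).\<close>
definition jidx_set :: "(nat \<times> nat \<times> nat) set" where
  "jidx_set = {(c,i,j). c < 2 \<and> 1 \<le> i + j \<and> i + j \<le> 4}"

typedef jidx = jidx_set
  by (rule exI[of _ "(0,1,0)"]) (simp add: jidx_set_def)

lemma finite_jidx_set: "finite jidx_set"
proof -
  have "jidx_set \<subseteq> {..<2} \<times> {..4} \<times> {..4}" by (auto simp: jidx_set_def)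
  then show ?thesis by (rule finite_subset) auto
qed

instance jidx :: finite
proof
  have "(UNIV :: jidx set) = Abs_jidx ` jidx_set"
    by (metis Rep_jidx Rep_jidx_inverse image_eqI subsetI subset_antisym UNIV_I)
  then show "finite (UNIV :: jidx set)" using finite_jidx_set by (metis finite_imageI)
qed

type_synonym jet = "real ^ jidx"

definition coef :: "jet \<Rightarrow> nat \<Rightarrow> nat \<Rightarrow> nat \<Rightarrow> real" where
  "coef f c i j = (if (c,i,j) \<in> jidx_set then f $ Abs_jidx (c,i,j) else 0)"

text \<open>Build a jet from coefficient arrays, truncating to degrees 1..4.\<close>
definition mkjet :: "(nat \<Rightarrow> nat \<Rightarrow> nat \<Rightarrow> real) \<Rightarrow> jet" where
  "mkjet P = (\<chi> k. case Rep_jidx k of (c,i,j) \<Rightarrow> P c i j)"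

text \<open>Bivariate polynomials as coefficient arrays (i,j) for x^i y^j.\<close>
type_synonym bpoly = "nat \<Rightarrow> nat \<Rightarrow> real"

definition pmul :: "bpoly \<Rightarrow> bpoly \<Rightarrow> bpoly" where
  "pmul p q = (\<lambda>i j. \<Sum>a\<le>i. \<Sum>b\<le>j. p a b * q (i - a) (j - b))"

primrec ppow :: "bpoly \<Rightarrow> nat \<Rightarrow> bpoly" where
  "ppow p 0 = (\<lambda>i j. if i = 0 \<and> j = 0 then 1 else 0)"
| "ppow p (Suc n) = pmul p (ppow p n)"

definition jmonos :: "(nat \<times> nat) set" where
  "jmonos = {(a,b). 1 \<le> a + b \<and> a + b \<le> 4}"

definition jcomp :: "jet \<Rightarrow> jet \<Rightarrow> jet" where
  "jcomp \<phi> f = mkjet (\<lambda>c i j.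
     \<Sum>(a,b)\<in>jmonos. coef \<phi> c a b * pmul (ppow (coef f 0) a) (ppow (coef f 1) b) i j)"

text \<open>Matrix of the linear term: row = output component, column = input variable (x,y).\<close>
definition linpart :: "jet \<Rightarrow> real ^ 2 ^ 2" where
  "linpart f = (\<chi> r s. coef f (if r = 1 then 0 else 1)
                               (if s = 1 then 1 else 0) (if s = 1 then 0 else 1))"

definition J1 :: "jet set" where
  "J1 = {f. rank (linpart f) = 1}"

definition Gjet :: "jet set" where
  "Gjet = {\<phi>. invertible (linpart \<phi>)}"

definition Njet :: "jet set" where
  "Njet = {f. coef f 0 1 0 = 1 \<and> (\<forall>i j. (i,j) \<noteq> (1,0) \<longrightarrow> coef f 0 i j = 0)
              \<and> coef f 1 1 0 = 0 \<and> coef f 1 0 1 = 0}"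

end

theory Submission
  imports Defs "HOL-Computational_Algebra.Formal_Power_Series"
begin

(* Fix v in R^2 and put c = L(g) v for the
   linear part L(g) of g.  Over the relatively open set of g in J1 with c <> 0, the triple
   (phi, f, psi) is sent to (g, C^-1 phi, 0, (x, psi R^-1)), where C is the conformal matrix
   with first column c and R a conformal matrix built from the row c^T L(g).  Its inverse is
   written down explicitly, so both directions are rational, hence smooth.  Since every point
   of J1 lies over such a chart and the composition map is onto J1, the theorem follows. *)

section \<open>Truncated bivariate power series\<close>

text \<open>A bivariate formal power series; the coefficient of \<open>x\<^sup>i y\<^sup>j\<close> is \<open>scoef P i j\<close>.\<close>
type_synonym bser = "real fps fps"

abbreviation scoef :: "bser \<Rightarrow> nat \<Rightarrow> nat \<Rightarrow> real" where
  "scoef P i j \<equiv> fps_nth (fps_nth P j) i"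

definition ser_of :: "bpoly \<Rightarrow> bser" where
  "ser_of p = Abs_fps (\<lambda>j. Abs_fps (\<lambda>i. p i j))"

lemma ser_of_nth[simp]: "scoef (ser_of p) i j = p i j"
  by (simp add: ser_of_def)

lemma bser_eqI: "(\<And>i j. scoef P i j = scoef Q i j) \<Longrightarrow> P = Q"
  by (simp add: fps_eq_iff)

lemma bser_mult_nth:
  "scoef (P * Q) i j = (\<Sum>b=0..j. \<Sum>a=0..i. scoef P a b * scoef Q (i - a) (j - b))"
  by (simp add: fps_mult_nth fps_sum_nth)

lemma ser_of_pmul: "ser_of (pmul p q) = ser_of p * ser_of q"
proof (rule bser_eqI)
  fix i j
  show "scoef (ser_of (pmul p q)) i j = scoef (ser_of p * ser_of q) i j"
    unfolding bser_mult_nth ser_of_nth pmul_def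
    by (subst sum.swap) (simp add: atLeast0AtMost)
qed

lemma ser_of_ppow: "ser_of (ppow p n) = ser_of p ^ n"
proof (induction n)
  case 0
  show ?case by (rule bser_eqI) (simp add: ser_of_def fps_one_nth)
next
  case (Suc n)
  then show ?case by (simp add: ser_of_pmul)
qed

definition ordge :: "nat \<Rightarrow> bser \<Rightarrow> bool" where
  "ordge k P \<longleftrightarrow> (\<forall>i j. i + j < k \<longrightarrow> scoef P i j = 0)"

lemma ordge_0[simp]: "ordge 0 P" by (simp add: ordge_def)
lemma ordge_zero[simp]: "ordge k 0" by (simp add: ordge_def)
lemma ordge_mono: "ordge k P \<Longrightarrow> l \<le> k \<Longrightarrow> ordge l P" by (auto simp: ordge_def)
lemma ordge_add: "ordge k P \<Longrightarrow> ordge k Q \<Longrightarrow> ordge k (P + Q)" by (auto simp: ordge_def)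
lemma ordge_diff: "ordge k P \<Longrightarrow> ordge k Q \<Longrightarrow> ordge k (P - Q)" by (auto simp: ordge_def)
lemma ordge_uminus: "ordge k P \<Longrightarrow> ordge k (- P)" by (auto simp: ordge_def)
lemma ordge_sum: "(\<And>x. x \<in> A \<Longrightarrow> ordge k (f x)) \<Longrightarrow> ordge k (sum f A)"
  by (induction A rule: infinite_finite_induct) (auto intro: ordge_add)

lemma ordge_mult: "ordge k P \<Longrightarrow> ordge l Q \<Longrightarrow> ordge (k + l) (P * Q)"
  unfolding ordge_def bser_mult_nth
proof (intro allI impI)
  fix i j assume P: "\<forall>i j. i + j < k \<longrightarrow> scoef P i j = 0" and Q: "\<forall>i j. i + j < l \<longrightarrow> scoef Q i j = 0"
    and ij: "i + j < k + l"
  show "(\<Sum>b = 0..j. \<Sum>a = 0..i. scoef P a b * scoef Q (i - a) (j - b)) = 0"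
  proof (intro sum.neutral ballI)
    fix b a assume "b \<in> {0..j}" "a \<in> {0..i}"
    then have "a + b < k \<or> (i - a) + (j - b) < l" using ij by auto
    then show "scoef P a b * scoef Q (i - a) (j - b) = 0" using P Q by auto
  qed
qed

lemma ordge_power: "ordge 1 X \<Longrightarrow> ordge a (X ^ a)"
proof (induction a)
  case (Suc a) then show ?case using ordge_mult[of 1 X a "X^a"] by simp
qed simp

lemma ordge_monomial: "ordge 1 X \<Longrightarrow> ordge 1 Y \<Longrightarrow> ordge (a + b) (X ^ a * Y ^ b)"
  by (intro ordge_mult ordge_power)

definition sconst :: "real \<Rightarrow> bser" where "sconst r = fps_const (fps_const r)"

lemma sconst_mult_nth[simp]: "scoef (sconst r * P) i j = r * scoef P i j"
  by (simp add: sconst_def)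

lemma ordge_sconst: "ordge k P \<Longrightarrow> ordge k (sconst r * P)" by (auto simp: ordge_def)

lemma sconst_0[simp]: "sconst 0 = 0" and sconst_1[simp]: "sconst 1 = 1" by (simp_all add: sconst_def)
lemma sconst_add: "sconst (a + b) = sconst a + sconst b" by (simp add: sconst_def)
lemma sconst_mult: "sconst (a * b) = sconst a * sconst b" by (simp add: sconst_def)

definition smonom :: "nat \<Rightarrow> nat \<Rightarrow> bser" where
  "smonom a b = fps_const (fps_X ^ a) * fps_X ^ b"

lemma smonom_nth[simp]: "scoef (smonom a b) i j = (if i = a \<and> j = b then 1 else 0)"
  by (simp add: smonom_def)

lemma smonom_mult: "smonom a b * smonom c d = smonom (a + c) (b + d)"
  by (simp add: smonom_def power_add algebra_simps flip: fps_const_mult)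

lemma smonom_powers: "smonom 1 0 ^ a * smonom 0 1 ^ b = smonom a b"
proof -
  have "smonom 1 0 ^ n = smonom n 0" "smonom 0 1 ^ n = smonom 0 n" for n
    by (induction n) (simp_all add: smonom_def power_add mult_ac)
  then show ?thesis by (simp add: smonom_mult)
qed

definition deg_le4 :: "(nat \<times> nat) set" where "deg_le4 = {(a,b). a + b \<le> 4}"

lemma finite_deg_le4[simp]: "finite deg_le4"
proof -
  have "deg_le4 \<subseteq> {..4} \<times> {..4}" by (auto simp: deg_le4_def)
  then show ?thesis by (rule finite_subset) auto
qed

text \<open>Congruence modulo terms of total degree \<open>\<ge> 5\<close>; it is compatible with the ring operations,
  so computations with truncated jets can be done in the series ring.\<close>
definition eq5 :: "bser \<Rightarrow> bser \<Rightarrow> bool" (infix "\<equiv>\<^sub>5" 50) where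
  "P \<equiv>\<^sub>5 Q \<longleftrightarrow> ordge 5 (P - Q)"

lemma eq5_refl[simp]: "P \<equiv>\<^sub>5 P" by (simp add: eq5_def)
lemma eq5_sym: "P \<equiv>\<^sub>5 Q \<Longrightarrow> Q \<equiv>\<^sub>5 P"
  unfolding eq5_def using ordge_uminus by fastforce
lemma eq5_trans[trans]: "P \<equiv>\<^sub>5 Q \<Longrightarrow> Q \<equiv>\<^sub>5 R \<Longrightarrow> P \<equiv>\<^sub>5 R"
  unfolding eq5_def using ordge_add by fastforce
lemma eq5_add: "P \<equiv>\<^sub>5 P' \<Longrightarrow> Q \<equiv>\<^sub>5 Q' \<Longrightarrow> P + Q \<equiv>\<^sub>5 P' + Q'"
  unfolding eq5_def using ordge_add by (fastforce simp: algebra_simps)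
lemma eq5_mult: "P \<equiv>\<^sub>5 P' \<Longrightarrow> Q \<equiv>\<^sub>5 Q' \<Longrightarrow> P * Q \<equiv>\<^sub>5 P' * Q'"
proof -
  assume a: "P \<equiv>\<^sub>5 P'" "Q \<equiv>\<^sub>5 Q'"
  have "P * Q - P' * Q' = (P - P') * Q + P' * (Q - Q')" by (simp add: algebra_simps)
  moreover have "ordge 5 ((P - P') * Q)" using ordge_mult[of 5 "P - P'" 0 Q] a by (simp add: eq5_def)
  moreover have "ordge 5 (P' * (Q - Q'))" using ordge_mult[of 0 P' 5 "Q - Q'"] a by (simp add: eq5_def)
  ultimately show ?thesis by (simp add: eq5_def ordge_add)
qed
lemma eq5_sum: "(\<And>x. x \<in> A \<Longrightarrow> f x \<equiv>\<^sub>5 g x) \<Longrightarrow> sum f A \<equiv>\<^sub>5 sum g A"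
  by (induction A rule: infinite_finite_induct) (auto intro: eq5_add)
lemma eq5_power: "P \<equiv>\<^sub>5 Q \<Longrightarrow> P ^ n \<equiv>\<^sub>5 Q ^ n"
  by (induction n) (auto intro: eq5_mult)
lemma eq5_nth: "P \<equiv>\<^sub>5 Q \<Longrightarrow> i + j < 5 \<Longrightarrow> scoef P i j = scoef Q i j"
  by (auto simp: eq5_def ordge_def)

definition trunc4 :: "bser \<Rightarrow> bser" where
  "trunc4 P = (\<Sum>(a,b)\<in>deg_le4. sconst (scoef P a b) * smonom a b)"

lemma trunc4_nth: "scoef (trunc4 P) i j = (if i + j \<le> 4 then scoef P i j else 0)"
proof -
  have "scoef (trunc4 P) i j = (\<Sum>x\<in>deg_le4. (if x = (i,j) then scoef P i j else 0))"
    unfolding trunc4_def fps_sum_nth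
    by (intro sum.cong refl) (auto simp: case_prod_beta)
  also have "\<dots> = (if i + j \<le> 4 then scoef P i j else 0)"
    by (simp only: sum.delta[OF finite_deg_le4]) (simp add: deg_le4_def)
  finally show ?thesis .
qed

lemma trunc4_cong: "P \<equiv>\<^sub>5 trunc4 P"
  by (auto simp: eq5_def ordge_def trunc4_nth)

text \<open>Substitution \<open>P(X, Y)\<close> of the degree \<open>\<le> 4\<close> part of \<open>P\<close>; for series \<open>X, Y\<close> without
  constant term it is a ring homomorphism modulo degree 5.\<close>
definition psubst :: "bser \<Rightarrow> bser \<Rightarrow> bser \<Rightarrow> bser" where
  "psubst X Y P = (\<Sum>(a,b)\<in>deg_le4. sconst (scoef P a b) * X ^ a * Y ^ b)"

lemma psubst_nth: "scoef (psubst X Y P) i j = (\<Sum>(a,b)\<in>deg_le4. scoef P a b * scoef (X ^ a * Y ^ b) i j)"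
  unfolding psubst_def fps_sum_nth by (intro sum.cong refl) (simp add: case_prod_beta mult.assoc)

lemma psubst_cong: "P \<equiv>\<^sub>5 Q \<Longrightarrow> psubst X Y P = psubst X Y Q"
proof -
  assume "P \<equiv>\<^sub>5 Q"
  then have "\<And>a b. (a,b) \<in> deg_le4 \<Longrightarrow> scoef P a b = scoef Q a b"
    by (auto simp: eq5_def ordge_def deg_le4_def)
  then show ?thesis unfolding psubst_def by (intro sum.cong) auto
qed

lemma psubst_add: "psubst X Y (P + Q) = psubst X Y P + psubst X Y Q"
  by (simp add: psubst_def sconst_add algebra_simps sum.distrib case_prod_beta)
lemma psubst_sconst: "psubst X Y (sconst r * P) = sconst r * psubst X Y P"
  unfolding psubst_def sum_distrib_left
  by (intro sum.cong refl) (simp only: case_prod_beta sconst_mult_nth sconst_mult, simp add: mult_ac)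
lemma psubst_0: "psubst X Y 0 = 0" by (simp add: psubst_def)
lemma psubst_sum: "psubst X Y (sum f A) = (\<Sum>x\<in>A. psubst X Y (f x))"
  by (induction A rule: infinite_finite_induct) (auto simp: psubst_add psubst_0)

lemma psubst_smonom: "psubst X Y (smonom a b) = (if a + b \<le> 4 then X ^ a * Y ^ b else 0)"
proof -
  have "psubst X Y (smonom a b) = (\<Sum>x\<in>deg_le4. (if x = (a,b) then X ^ a * Y ^ b else 0))"
    unfolding psubst_def by (intro sum.cong refl) (auto simp: case_prod_beta)
  then show ?thesis by (simp only: sum.delta[OF finite_deg_le4]) (simp add: deg_le4_def)
qed

lemma psubst_1: "psubst X Y 1 = 1"
proof -
  have "psubst X Y 1 = psubst X Y (smonom 0 0)" by (simp add: smonom_def)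
  then show ?thesis by (simp add: psubst_smonom)
qed

lemma psubst_lin: "psubst X Y (sconst p * smonom 1 0 + sconst q * smonom 0 1) = sconst p * X + sconst q * Y"
  by (simp add: psubst_add psubst_sconst psubst_smonom)

lemma psubst_coords: "psubst (smonom 1 0) (smonom 0 1) P = trunc4 P"
  unfolding psubst_def trunc4_def by (simp add: mult.assoc smonom_powers[simplified])

lemma psubst_trunc4: "psubst X Y (trunc4 P) = (\<Sum>(a,b)\<in>deg_le4. sconst (scoef P a b) * X ^ a * Y ^ b)"
  unfolding trunc4_def psubst_sum
  by (intro sum.cong refl) (auto simp: psubst_sconst psubst_smonom deg_le4_def mult.assoc)

lemma psubst_smonom_mult:
  assumes X: "ordge 1 X" and Y: "ordge 1 Y"
  shows "psubst X Y (smonom (a + c) (b + d)) \<equiv>\<^sub>5 X ^ a * Y ^ b * (X ^ c * Y ^ d)"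
proof (cases "a + c + (b + d) \<le> 4")
  case True then show ?thesis by (simp add: psubst_smonom power_add algebra_simps)
next
  case False
  have "ordge (a + b + (c + d)) (X ^ a * Y ^ b * (X ^ c * Y ^ d))"
    by (intro ordge_mult ordge_monomial X Y)
  then have "ordge 5 (X ^ a * Y ^ b * (X ^ c * Y ^ d))"
    by (rule ordge_mono) (use False in auto)
  then show ?thesis using False by (simp add: psubst_smonom eq5_def ordge_uminus)
qed

lemma psubst_mult:
  assumes X: "ordge 1 X" and Y: "ordge 1 Y"
  shows "psubst X Y (P * Q) \<equiv>\<^sub>5 psubst X Y P * psubst X Y Q"
proof -
  let ?c = "\<lambda>x y. sconst (scoef P (fst x) (snd x)) * sconst (scoef Q (fst y) (snd y))"
  have e1: "psubst X Y (P * Q) = psubst X Y (trunc4 P * trunc4 Q)"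
    by (rule psubst_cong) (intro eq5_mult trunc4_cong)
  have e2: "psubst X Y P = psubst X Y (trunc4 P)" "psubst X Y Q = psubst X Y (trunc4 Q)"
    by (rule psubst_cong, rule trunc4_cong)+
  have "trunc4 P * trunc4 Q =
      (\<Sum>x\<in>deg_le4. \<Sum>y\<in>deg_le4. ?c x y * smonom (fst x + fst y) (snd x + snd y))"
    unfolding trunc4_def sum_product
    by (intro sum.cong refl) (auto simp: case_prod_beta algebra_simps simp flip: smonom_mult)
  then have l: "psubst X Y (trunc4 P * trunc4 Q) =
      (\<Sum>x\<in>deg_le4. \<Sum>y\<in>deg_le4. ?c x y * psubst X Y (smonom (fst x + fst y) (snd x + snd y)))"
    by (simp add: psubst_sum mult.assoc psubst_sconst)
  have r: "psubst X Y (trunc4 P) * psubst X Y (trunc4 Q) =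
      (\<Sum>x\<in>deg_le4. \<Sum>y\<in>deg_le4. ?c x y * ((X ^ fst x * Y ^ snd x) * (X ^ fst y * Y ^ snd y)))"
    unfolding psubst_trunc4 sum_product
    by (intro sum.cong refl) (auto simp: case_prod_beta algebra_simps)
  have "psubst X Y (trunc4 P * trunc4 Q) \<equiv>\<^sub>5 psubst X Y (trunc4 P) * psubst X Y (trunc4 Q)"
    unfolding l r by (intro eq5_sum eq5_mult eq5_refl psubst_smonom_mult X Y)
  then show ?thesis using e1 e2 by simp
qed

lemma psubst_power:
  assumes "ordge 1 X" "ordge 1 Y"
  shows "psubst X Y (P ^ n) \<equiv>\<^sub>5 psubst X Y P ^ n"
proof (induction n)
  case 0 then show ?case by (simp add: psubst_1)
next
  case (Suc n)
  have "psubst X Y (P ^ Suc n) \<equiv>\<^sub>5 psubst X Y P * psubst X Y (P ^ n)"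
    using psubst_mult[OF assms] by simp
  also have "psubst X Y P * psubst X Y (P ^ n) \<equiv>\<^sub>5 psubst X Y P * psubst X Y P ^ n"
    using Suc by (intro eq5_mult eq5_refl)
  finally show ?case by simp
qed

lemma psubst_cong_XY:
  "X \<equiv>\<^sub>5 X' \<Longrightarrow> Y \<equiv>\<^sub>5 Y' \<Longrightarrow> psubst X Y P \<equiv>\<^sub>5 psubst X' Y' P"
  unfolding psubst_def by (intro eq5_sum) (auto simp: case_prod_beta intro!: eq5_mult eq5_power)

lemma psubst_psubst:
  assumes "ordge 1 X" "ordge 1 Y"
  shows "psubst X Y (psubst U V P) \<equiv>\<^sub>5 psubst (psubst X Y U) (psubst X Y V) P"
proof -
  have "psubst X Y (psubst U V P) = (\<Sum>(a,b)\<in>deg_le4. sconst (scoef P a b) * psubst X Y (U ^ a * V ^ b))"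
    unfolding psubst_def[of U V P] psubst_sum
    by (intro sum.cong refl) (simp add: case_prod_beta mult.assoc psubst_sconst)
  also have "\<dots> \<equiv>\<^sub>5 (\<Sum>(a,b)\<in>deg_le4. sconst (scoef P a b) * (psubst X Y U ^ a * psubst X Y V ^ b))"
  proof (intro eq5_sum)
    fix x assume "x \<in> deg_le4"
    obtain a b where x: "x = (a,b)" by (cases x)
    have "psubst X Y (U ^ a * V ^ b) \<equiv>\<^sub>5 psubst X Y (U ^ a) * psubst X Y (V ^ b)"
      by (rule psubst_mult[OF assms])
    also have "\<dots> \<equiv>\<^sub>5 psubst X Y U ^ a * psubst X Y V ^ b" by (intro eq5_mult psubst_power assms)
    finally show "(case x of (a, b) \<Rightarrow> sconst (scoef P a b) * psubst X Y (U ^ a * V ^ b)) \<equiv>\<^sub>5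
          (case x of (a, b) \<Rightarrow> sconst (scoef P a b) * (psubst X Y U ^ a * psubst X Y V ^ b))"
      unfolding x by (simp add: eq5_mult)
  qed
  also have "\<dots> = psubst (psubst X Y U) (psubst X Y V) P"
    unfolding psubst_def by (intro sum.cong refl) (simp add: case_prod_beta mult.assoc)
  finally show ?thesis .
qed

text \<open>Only monomials of degree \<open>\<ge> a + b\<close> occur in \<open>X\<^sup>a Y\<^sup>b\<close>; hence the terms of degree \<open>\<le> 1\<close> of a
  substitution only see the linear part of \<open>P\<close>.\<close>
lemma scoef_monomial_low: "ordge 1 X \<Longrightarrow> ordge 1 Y \<Longrightarrow> i + j < a + b \<Longrightarrow> scoef (X ^ a * Y ^ b) i j = 0"
  using ordge_monomial[of X Y a b] by (simp add: ordge_def)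

lemma psubst_low:
  assumes P: "ordge 1 P" and X: "ordge 1 X" and Y: "ordge 1 Y" and ij: "i + j \<le> 1"
  shows "scoef (psubst X Y P) i j = scoef P 1 0 * scoef X i j + scoef P 0 1 * scoef Y i j"
proof -
  let ?S = "{(0,0),(1,0),(0,1)} :: (nat \<times> nat) set"
  have "scoef (psubst X Y P) i j = (\<Sum>(a,b)\<in>deg_le4. scoef P a b * scoef (X ^ a * Y ^ b) i j)"
    by (rule psubst_nth)
  also have "\<dots> = (\<Sum>(a,b)\<in>?S. scoef P a b * scoef (X ^ a * Y ^ b) i j)"
  proof (rule sum.mono_neutral_right)
    show "?S \<subseteq> deg_le4" by (auto simp: deg_le4_def)
    show "\<forall>x\<in>deg_le4 - ?S. (case x of (a, b) \<Rightarrow> scoef P a b * scoef (X ^ a * Y ^ b) i j) = 0"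
    proof
      fix x assume x: "x \<in> deg_le4 - ?S"
      obtain a b where ab: "x = (a,b)" by (cases x)
      then have "i + j < a + b" using x ij by auto
      then show "(case x of (a, b) \<Rightarrow> scoef P a b * scoef (X ^ a * Y ^ b) i j) = 0"
        using scoef_monomial_low[OF X Y] ab by simp
    qed
  qed simp
  also have "\<dots> = scoef P 1 0 * scoef X i j + scoef P 0 1 * scoef Y i j"
    using P by (simp add: ordge_def)
  finally show ?thesis .
qed

lemma pow_diff:
  assumes X: "ordge 1 X" "ordge 1 X'" and d: "ordge (Suc d) (X - X')"
  shows "ordge (d + a) (X ^ a - X' ^ a)"
proof (induction a)
  case 0 then show ?case by simp
next
  case (Suc a)
  have e: "X ^ Suc a - X' ^ Suc a = (X - X') * X ^ a + X' * (X ^ a - X' ^ a)"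
    by (simp add: algebra_simps)
  have "ordge (Suc d + a) ((X - X') * X ^ a)" by (intro ordge_mult d ordge_power X)
  moreover have "ordge (1 + (d + a)) (X' * (X ^ a - X' ^ a))" by (intro ordge_mult X Suc)
  ultimately show ?case unfolding e by (intro ordge_add) simp_all
qed

lemma monomial_diff:
  assumes X: "ordge 1 X" "ordge 1 X'" "ordge (Suc d) (X - X')"
    and Y: "ordge 1 Y" "ordge 1 Y'" "ordge (Suc d) (Y - Y')"
  shows "ordge (d + (a + b)) (X ^ a * Y ^ b - X' ^ a * Y' ^ b)"
proof -
  have e: "X ^ a * Y ^ b - X' ^ a * Y' ^ b = (X ^ a - X' ^ a) * Y ^ b + X' ^ a * (Y ^ b - Y' ^ b)"
    by (simp add: algebra_simps)
  have "ordge (d + a + b) ((X ^ a - X' ^ a) * Y ^ b)"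
    by (intro ordge_mult pow_diff X ordge_power Y)
  moreover have "ordge (a + (d + b)) (X' ^ a * (Y ^ b - Y' ^ b))"
    by (intro ordge_mult pow_diff Y ordge_power X)
  ultimately show ?thesis unfolding e by (intro ordge_add) (simp_all add: ac_simps)
qed

lemma psubst_diff_XY:
  "psubst X Y P - psubst X' Y' P =
     (\<Sum>(a,b)\<in>deg_le4. sconst (scoef P a b) * (X ^ a * Y ^ b - X' ^ a * Y' ^ b))"
  unfolding psubst_def sum_subtractf[symmetric]
  by (intro sum.cong refl) (simp add: case_prod_beta algebra_simps)

lemma ordge1_psubst: "ordge 1 P \<Longrightarrow> ordge 1 X \<Longrightarrow> ordge 1 Y \<Longrightarrow> ordge 1 (psubst X Y P)"
  unfolding ordge_def[of 1 "psubst X Y P"] psubst_nth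
proof (intro allI impI sum.neutral ballI)
  fix i j :: nat and x :: "nat \<times> nat"
  assume P: "ordge 1 P" and X: "ordge 1 X" and Y: "ordge 1 Y" and ij: "i + j < 1"
  obtain a b where x: "x = (a,b)" by (cases x)
  show "(case x of (a, b) \<Rightarrow> scoef P a b * scoef (X ^ a * Y ^ b) i j) = 0"
  proof (cases "a + b = 0")
    case True then show ?thesis using P x by (simp add: ordge_def)
  next
    case False then show ?thesis using x ij scoef_monomial_low[OF X Y, of i j a b] by simp
  qed
qed

section \<open>Jets as truncated power series\<close>

definition jser :: "jet \<Rightarrow> nat \<Rightarrow> bser" where "jser f c = ser_of (coef f c)"

lemma scoef_jser[simp]: "scoef (jser f c) i j = coef f c i j" by (simp add: jser_def)

lemma jidx_set_iff[simp]: "(c,i,j) \<in> jidx_set \<longleftrightarrow> c < 2 \<and> 1 \<le> i + j \<and> i + j \<le> 4"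
  by (simp add: jidx_set_def)

lemma coef_mkjet: "coef (mkjet P) c i j = (if (c,i,j) \<in> jidx_set then P c i j else 0)"
  by (simp add: coef_def mkjet_def Abs_jidx_inverse)

lemma coef_out: "(c,i,j) \<notin> jidx_set \<Longrightarrow> coef f c i j = 0"
  by (simp add: coef_def del: jidx_set_iff)

lemma coef_00[simp]: "coef f c 0 0 = 0" by (simp add: coef_def)

lemma coef_add[simp]: "coef (x + y) c i j = coef x c i j + coef y c i j" by (simp add: coef_def)
lemma coef_diff[simp]: "coef (x - y) c i j = coef x c i j - coef y c i j" by (simp add: coef_def)
lemma coef_zero[simp]: "coef 0 c i j = 0" by (simp add: coef_def)

lemma jet_eqI: "(\<And>c i j. (c,i,j) \<in> jidx_set \<Longrightarrow> coef x c i j = coef y c i j) \<Longrightarrow> x = y"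
proof -
  assume h: "\<And>c i j. (c,i,j) \<in> jidx_set \<Longrightarrow> coef x c i j = coef y c i j"
  show "x = y"
  proof (rule vec_eq_iff[THEN iffD2], rule allI)
    fix k
    obtain c i j where r: "Rep_jidx k = (c,i,j)" by (cases "Rep_jidx k") auto
    then have m: "(c,i,j) \<in> jidx_set" using Rep_jidx[of k] by simp
    have "Abs_jidx (c,i,j) = k" using r Rep_jidx_inverse[of k] by simp
    then show "x $ k = y $ k" using h[OF m] m by (simp add: coef_def)
  qed
qed

lemma ordge1_jser[simp]: "ordge (Suc 0) (jser f c)" by (simp add: ordge_def)

lemma jser_add: "jser (x + y) c = jser x c + jser y c" by (rule bser_eqI) simp
lemma jser_diff: "jser (x - y) c = jser x c - jser y c" by (rule bser_eqI) simp
lemma jser_zero: "jser 0 c = 0" by (rule bser_eqI) simp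

lemma jet_eq_cong:
  assumes "\<And>c. c < 2 \<Longrightarrow> jser x c \<equiv>\<^sub>5 jser y c" shows "x = y"
proof (rule jet_eqI)
  fix c i j assume m: "(c,i,j) \<in> jidx_set"
  then have "ordge 5 (jser x c - jser y c)" using assms by (simp add: eq5_def)
  then have "scoef (jser x c - jser y c) i j = 0" using m by (simp add: ordge_def)
  then show "coef x c i j = coef y c i j" by simp
qed

lemma jet_eq_jser: "jser x 0 = jser y 0 \<Longrightarrow> jser x 1 = jser y 1 \<Longrightarrow> x = y"
  by (rule jet_eq_cong) (auto simp: less_2_cases_iff)

lemma jmonos_deg_le4: "deg_le4 = insert (0,0) jmonos" "(0,0) \<notin> jmonos"
  by (auto simp: deg_le4_def jmonos_def)

lemma finite_jmonos: "finite jmonos"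
  using finite_deg_le4 jmonos_deg_le4 by (metis finite_insert)

lemma jser_jcomp: "c < 2 \<Longrightarrow> jser (jcomp \<phi> f) c \<equiv>\<^sub>5 psubst (jser f 0) (jser f 1) (jser \<phi> c)"
  unfolding eq5_def ordge_def
proof (intro allI impI)
  fix i j :: nat assume c: "c < 2" and ij: "i + j < 5"
  have e: "\<And>a b. scoef (jser f 0 ^ a * jser f 1 ^ b) i j = pmul (ppow (coef f 0) a) (ppow (coef f 1) b) i j"
    by (simp add: jser_def flip: ser_of_ppow ser_of_pmul)
  show "scoef (jser (jcomp \<phi> f) c - psubst (jser f 0) (jser f 1) (jser \<phi> c)) i j = 0"
  proof (cases "i + j = 0")
    case True
    then have "scoef (psubst (jser f 0) (jser f 1) (jser \<phi> c)) i j = 0"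
      using ordge1_psubst[of "jser \<phi> c" "jser f 0" "jser f 1"] by (simp add: ordge_def)
    then show ?thesis using True by simp
  next
    case False
    then have m: "(c,i,j) \<in> jidx_set" using c ij by auto
    have "scoef (psubst (jser f 0) (jser f 1) (jser \<phi> c)) i j =
       (\<Sum>(a,b)\<in>jmonos. coef \<phi> c a b * pmul (ppow (coef f 0) a) (ppow (coef f 1) b) i j)"
      unfolding psubst_nth jmonos_deg_le4(1) using jmonos_deg_le4(2) finite_jmonos
      by (simp add: e[simplified] case_prod_beta)
    then show ?thesis using m by (simp add: jcomp_def coef_mkjet)
  qed
qed

theorem jcomp_assoc: "jcomp a (jcomp f \<psi>) = jcomp (jcomp a f) \<psi>"
proof (rule jet_eq_cong)
  fix c :: nat assume c: "c < 2"
  let ?X = "jser \<psi> 0" and ?Y = "jser \<psi> 1"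
  have "jser (jcomp a (jcomp f \<psi>)) c \<equiv>\<^sub>5 psubst (jser (jcomp f \<psi>) 0) (jser (jcomp f \<psi>) 1) (jser a c)"
    by (rule jser_jcomp[OF c])
  also have "\<dots> \<equiv>\<^sub>5 psubst (psubst ?X ?Y (jser f 0)) (psubst ?X ?Y (jser f 1)) (jser a c)"
    by (intro psubst_cong_XY jser_jcomp) auto
  also have "\<dots> \<equiv>\<^sub>5 psubst ?X ?Y (psubst (jser f 0) (jser f 1) (jser a c))"
    by (rule eq5_sym, rule psubst_psubst) auto
  also have "\<dots> = psubst ?X ?Y (jser (jcomp a f) c)"
    by (rule psubst_cong, rule eq5_sym, rule jser_jcomp[OF c])
  also have "\<dots> \<equiv>\<^sub>5 jser (jcomp (jcomp a f) \<psi>) c"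
    by (rule eq5_sym, rule jser_jcomp[OF c])
  finally show "jser (jcomp a (jcomp f \<psi>)) c \<equiv>\<^sub>5 jser (jcomp (jcomp a f) \<psi>) c" .
qed

definition jpair :: "jet \<Rightarrow> jet \<Rightarrow> jet" where
  "jpair a b = mkjet (\<lambda>c i j. if c = 0 then coef a 0 i j else coef b 1 i j)"

definition linjet :: "real \<Rightarrow> real \<Rightarrow> real \<Rightarrow> real \<Rightarrow> jet" where
  "linjet m00 m01 m10 m11 = mkjet (\<lambda>c i j.
     if (i,j) = (1,0) then (if c = 0 then m00 else m10)
     else if (i,j) = (0,1) then (if c = 0 then m01 else m11) else 0)"

definition jid :: jet where "jid = linjet 1 0 0 1"

lemma coef_jpair:
  "coef (jpair a b) c i j = (if c = 0 then coef a 0 i j else if c = 1 then coef b 1 i j else 0)"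
proof (cases "(c,i,j) \<in> jidx_set")
  case True then show ?thesis by (auto simp: jpair_def coef_mkjet)
next
  case False
  then have "(c = 0 \<longrightarrow> coef a 0 i j = 0) \<and> (c = 1 \<longrightarrow> coef b 1 i j = 0)"
    by (auto intro: coef_out)
  then show ?thesis using False by (auto simp: jpair_def coef_mkjet simp del: jidx_set_iff)
qed

lemma jser_jpair[simp]: "jser (jpair a b) 0 = jser a 0" "jser (jpair a b) (Suc 0) = jser b (Suc 0)"
  by (rule bser_eqI, simp add: coef_jpair)+

lemma coef_linjet: "coef (linjet m00 m01 m10 m11) c i j =
   (if c < 2 then (if (i,j) = (1,0) then (if c = 0 then m00 else m10)
     else if (i,j) = (0,1) then (if c = 0 then m01 else m11) else 0) else 0)"
  by (auto simp: linjet_def coef_mkjet)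

lemma jser_linjet:
  "jser (linjet m00 m01 m10 m11) 0 = sconst m00 * smonom 1 0 + sconst m01 * smonom 0 1"
  "jser (linjet m00 m01 m10 m11) (Suc 0) = sconst m10 * smonom 1 0 + sconst m11 * smonom 0 1"
  by (rule bser_eqI, auto simp: coef_linjet)+

lemma jcomp_jid_left: "jcomp jid f = f"
proof (rule jet_eq_cong)
  fix c :: nat assume c: "c < 2"
  have "jser (jcomp jid f) c \<equiv>\<^sub>5 psubst (jser f 0) (jser f 1) (jser jid c)" by (rule jser_jcomp[OF c])
  also have "psubst (jser f 0) (jser f 1) (jser jid c) = jser f c"
  proof -
    have "c = 0 \<or> c = 1" using c by auto
    then show ?thesis by (elim disjE) (simp_all add: jid_def jser_linjet psubst_lin psubst_smonom)
  qed
  finally show "jser (jcomp jid f) c \<equiv>\<^sub>5 jser f c" .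
qed

lemma jcomp_jid_right: "jcomp f jid = f"
proof (rule jet_eq_cong)
  fix c :: nat assume c: "c < 2"
  have "jser (jcomp f jid) c \<equiv>\<^sub>5 psubst (jser jid 0) (jser jid 1) (jser f c)" by (rule jser_jcomp[OF c])
  also have "psubst (jser jid 0) (jser jid 1) (jser f c) = trunc4 (jser f c)"
    by (simp add: jid_def jser_linjet psubst_coords[symmetric])
  also have "trunc4 (jser f c) \<equiv>\<^sub>5 jser f c" by (rule eq5_sym, rule trunc4_cong)
  finally show "jser (jcomp f jid) c \<equiv>\<^sub>5 jser f c" .
qed

lemma jcomp_add_left: "jcomp (a + b) f = jcomp a f + jcomp b f"
proof (rule jet_eq_cong)
  fix c :: nat assume c: "c < 2"
  have "jser (jcomp (a + b) f) c \<equiv>\<^sub>5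
      psubst (jser f 0) (jser f 1) (jser a c) + psubst (jser f 0) (jser f 1) (jser b c)"
    using jser_jcomp[OF c, of "a + b" f] by (simp add: jser_add psubst_add)
  also have "\<dots> \<equiv>\<^sub>5 jser (jcomp a f) c + jser (jcomp b f) c"
    by (rule eq5_add[OF eq5_sym[OF jser_jcomp[OF c]] eq5_sym[OF jser_jcomp[OF c]]])
  finally show "jser (jcomp (a + b) f) c \<equiv>\<^sub>5 jser (jcomp a f + jcomp b f) c" by (simp add: jser_add)
qed

lemma jcomp_jpair: "jcomp (jpair a b) f = jpair (jcomp a f) (jcomp b f)"
proof (rule jet_eq_cong)
  fix c :: nat assume c: "c < 2"
  show "jser (jcomp (jpair a b) f) c \<equiv>\<^sub>5 jser (jpair (jcomp a f) (jcomp b f)) c"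
  proof (cases "c = 0")
    case True
    have "jser (jcomp (jpair a b) f) 0 \<equiv>\<^sub>5 psubst (jser f 0) (jser f 1) (jser a 0)"
      using jser_jcomp[of 0 "jpair a b" f] by simp
    also have "\<dots> \<equiv>\<^sub>5 jser (jcomp a f) 0" by (rule eq5_sym, rule jser_jcomp) simp
    finally show ?thesis using True by simp
  next
    case False
    then have c1: "c = 1" using c by simp
    have "jser (jcomp (jpair a b) f) 1 \<equiv>\<^sub>5 psubst (jser f 0) (jser f 1) (jser b 1)"
      using jser_jcomp[of 1 "jpair a b" f] by simp
    also have "\<dots> \<equiv>\<^sub>5 jser (jcomp b f) 1" by (rule eq5_sym, rule jser_jcomp) simp
    finally show ?thesis using c1 by simp
  qed
qed

lemma jpair_same: "jpair a a = a"
  by (rule jet_eq_jser) simp_all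
lemma jpair_left: "jpair (jpair a b) c = jpair a c"
  by (rule jet_eq_jser) simp_all
lemma jpair_right: "jpair a (jpair b c) = jpair a c"
  by (rule jet_eq_jser) simp_all
lemma jpair_eq_first: "jser a 0 = jser b 0 \<Longrightarrow> jpair a c = jpair b c"
  by (rule jet_eq_jser) simp_all

lemma jcomp_linjet_linjet: "jcomp (linjet a b c d) (linjet p q r s) =
   linjet (a*p + b*r) (a*q + b * s) (c*p + d*r) (c*q + d * s)"
proof (rule jet_eq_cong)
  fix k :: nat assume k: "k < 2"
  have "jser (jcomp (linjet a b c d) (linjet p q r s)) k \<equiv>\<^sub>5
     psubst (jser (linjet p q r s) 0) (jser (linjet p q r s) 1) (jser (linjet a b c d) k)"
    by (rule jser_jcomp[OF k])
  also have "\<dots> = jser (linjet (a*p + b*r) (a*q + b * s) (c*p + d*r) (c*q + d * s)) k"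
  proof -
    have "k = 0 \<or> k = 1" using k by auto
    then show ?thesis
      by (elim disjE; simp only: One_nat_def jser_linjet psubst_lin[simplified] sconst_add sconst_mult;
          simp only: ring_distribs ac_simps)
  qed
  finally show "jser (jcomp (linjet a b c d) (linjet p q r s)) k \<equiv>\<^sub>5
      jser (linjet (a*p + b*r) (a*q + b * s) (c*p + d*r) (c*q + d * s)) k" .
qed

lemma jcomp_zero_right: "jcomp a 0 = 0"
proof (rule jet_eq_cong)
  fix c :: nat assume c: "c < 2"
  have "jser (jcomp a 0) c \<equiv>\<^sub>5 psubst 0 0 (jser a c)" using jser_jcomp[OF c, of a 0] by (simp add: jser_zero)
  also have "psubst 0 0 (jser a c) = 0"
  proof (rule bser_eqI)
    fix i j
    have "scoef (psubst 0 0 (jser a c)) i j = 0"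
      unfolding psubst_nth
    proof (intro sum.neutral ballI)
      fix x :: "nat \<times> nat"
      obtain p q where x: "x = (p,q)" by (cases x)
      show "(case x of (p, q) \<Rightarrow> scoef (jser a c) p q * scoef (0 ^ p * 0 ^ q) i j) = 0"
        unfolding x by (cases p; cases q) auto
    qed
    then show "scoef (psubst 0 0 (jser a c)) i j = scoef 0 i j" by simp
  qed
  finally show "jser (jcomp a 0) c \<equiv>\<^sub>5 jser 0 c" by (simp add: jser_zero)
qed

section \<open>Linear parts\<close>

definition L00 :: "jet \<Rightarrow> real" where "L00 g = coef g 0 1 0"
definition L01 :: "jet \<Rightarrow> real" where "L01 g = coef g 0 0 1"
definition L10 :: "jet \<Rightarrow> real" where "L10 g = coef g 1 1 0"
definition L11 :: "jet \<Rightarrow> real" where "L11 g = coef g 1 0 1"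

lemma coef_jcomp_lin:
  assumes c: "c < 2" and ij: "i + j = 1"
  shows "coef (jcomp a b) c i j = coef a c 1 0 * coef b 0 i j + coef a c 0 1 * coef b 1 i j"
proof -
  have "coef (jcomp a b) c i j = scoef (psubst (jser b 0) (jser b 1) (jser a c)) i j"
    using eq5_nth[OF jser_jcomp[OF c, of a b], of i j] ij by simp
  also have "\<dots> = coef a c 1 0 * coef b 0 i j + coef a c 0 1 * coef b 1 i j"
    by (subst psubst_low) (use ij in auto)
  finally show ?thesis .
qed

lemma L_jcomp[simp]:
  "L00 (jcomp a b) = L00 a * L00 b + L01 a * L10 b"
  "L01 (jcomp a b) = L00 a * L01 b + L01 a * L11 b"
  "L10 (jcomp a b) = L10 a * L00 b + L11 a * L10 b"
  "L11 (jcomp a b) = L10 a * L01 b + L11 a * L11 b"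
  by (simp_all add: L00_def L01_def L10_def L11_def coef_jcomp_lin)

lemma L_linjet[simp]:
  "L00 (linjet p q r s) = p" "L01 (linjet p q r s) = q" "L10 (linjet p q r s) = r" "L11 (linjet p q r s) = s"
  by (simp_all add: L00_def L01_def L10_def L11_def coef_linjet)

lemma L_jpair[simp]:
  "L00 (jpair a b) = L00 a" "L01 (jpair a b) = L01 a" "L10 (jpair a b) = L10 b" "L11 (jpair a b) = L11 b"
  by (simp_all add: L00_def L01_def L10_def L11_def coef_jpair)

lemma L_jid[simp]: "L00 jid = 1" "L01 jid = 0" "L10 jid = 0" "L11 jid = 1"
  by (simp_all add: jid_def)

lemma linjet_jid: "a = 1 \<Longrightarrow> b = 0 \<Longrightarrow> c = 0 \<Longrightarrow> d = 1 \<Longrightarrow> linjet a b c d = jid"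
  by (simp add: jid_def)

definition jdet :: "jet \<Rightarrow> real" where
  "jdet g = L00 g * L11 g - L01 g * L10 g"

lemma jdet_jcomp: "jdet (jcomp a b) = jdet a * jdet b"
  by (simp add: jdet_def algebra_simps)

lemma linpart_nth:
  "linpart g $ 1 $ 1 = L00 g" "linpart g $ 1 $ 2 = L01 g"
  "linpart g $ 2 $ 1 = L10 g" "linpart g $ 2 $ 2 = L11 g"
  by (simp_all add: linpart_def L00_def L01_def L10_def L11_def)

lemma det_linpart: "det (linpart g) = jdet g"
  by (simp add: det_2 linpart_nth jdet_def)

lemma linpart_zero: "linpart g = 0 \<longleftrightarrow> L00 g = 0 \<and> L01 g = 0 \<and> L10 g = 0 \<and> L11 g = 0"
  by (simp add: vec_eq_iff forall_2 linpart_nth)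

lemma Gjet_iff: "g \<in> Gjet \<longleftrightarrow> jdet g \<noteq> 0"
  by (simp add: Gjet_def invertible_det_nz det_linpart)

text \<open>A 2 x 2 matrix has rank 1 iff it is nonzero and singular.\<close>
lemma J1_iff: "g \<in> J1 \<longleftrightarrow> jdet g = 0 \<and> \<not> (L00 g = 0 \<and> L01 g = 0 \<and> L10 g = 0 \<and> L11 g = 0)"
proof -
  have "rank (linpart g) = 1 \<longleftrightarrow> rank (linpart g) \<noteq> 0 \<and> rank (linpart g) < 2"
    using rank_bound[of "linpart g"] by auto
  also have "\<dots> \<longleftrightarrow> linpart g \<noteq> 0 \<and> det (linpart g) = 0"
    by (simp add: rank_eq_0 det_eq_0_rank)
  finally show ?thesis unfolding J1_def mem_Collect_eq linpart_zero det_linpart by auto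
qed

lemma coef_jid: "coef jid 0 i j = (if i = 1 \<and> j = 0 then 1 else 0)"
  by (auto simp: jid_def coef_linjet)

lemma Njet_iff: "f \<in> Njet \<longleftrightarrow> jpair jid f = f \<and> L10 f = 0 \<and> L11 f = 0"
proof -
  have "jpair jid f = f \<longleftrightarrow> (\<forall>i j. coef f 0 i j = coef jid 0 i j)"
  proof
    assume "jpair jid f = f"
    then show "\<forall>i j. coef f 0 i j = coef jid 0 i j"
      by (metis coef_jpair)
  next
    assume h: "\<forall>i j. coef f 0 i j = coef jid 0 i j"
    show "jpair jid f = f"
    proof (rule jet_eqI)
      fix c i j assume "(c, i, j) \<in> jidx_set"
      then have "c = 0 \<or> c = 1" by auto
      then show "coef (jpair jid f) c i j = coef f c i j" by (auto simp: coef_jpair h)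
    qed
  qed
  then show ?thesis
    by (auto simp: Njet_def L10_def L11_def coef_jid)
qed

lemma Njet_L: "f \<in> Njet \<Longrightarrow> L00 f = 1 \<and> L01 f = 0 \<and> L10 f = 0 \<and> L11 f = 0"
proof -
  assume f: "f \<in> Njet"
  then have e: "jpair jid f = f" and "L10 f = 0" "L11 f = 0" by (auto simp: Njet_iff)
  moreover have "L00 f = 1" "L01 f = 0"
    using arg_cong[OF e, of L00] arg_cong[OF e, of L01] by simp_all
  ultimately show ?thesis by simp
qed

section \<open>Inverting jets with invertible linear part\<close>

definition agree :: "nat \<Rightarrow> jet \<Rightarrow> jet \<Rightarrow> bool" where
  "agree d x y \<longleftrightarrow> (\<forall>c<2. ordge (Suc d) (jser x c - jser y c))"

lemma agree_refl: "agree d x x" by (simp add: agree_def)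
lemma agree_sym: "agree d x y \<Longrightarrow> agree d y x"
  unfolding agree_def using ordge_uminus by fastforce
lemma agree_trans: "agree d x y \<Longrightarrow> agree d y z \<Longrightarrow> agree d x z"
  unfolding agree_def using ordge_add by fastforce
lemma agree_mono: "agree d x y \<Longrightarrow> e \<le> d \<Longrightarrow> agree e x y"
  unfolding agree_def using ordge_mono by (meson Suc_le_mono)
lemma agree_0: "agree 0 x y"
  unfolding agree_def by (auto intro!: ordge_diff)
lemma agree_eq: "agree 4 x y \<Longrightarrow> x = y"
  unfolding agree_def by (intro jet_eq_cong) (simp add: eq5_def numeral_eq_Suc)
lemma agree_diff: "agree d x y \<Longrightarrow> agree d x' y' \<Longrightarrow> agree d (x - x') (y - y')"
  unfolding agree_def jser_diff using ordge_diff by (fastforce simp: algebra_simps)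
lemma agree_coef: "agree 1 x y \<Longrightarrow> i + j \<le> 1 \<Longrightarrow> coef x c i j = coef y c i j"
proof -
  assume a: "agree 1 x y" and ij: "i + j \<le> 1"
  show ?thesis
  proof (cases "c < 2")
    case True
    then have "ordge 2 (jser x c - jser y c)" using a by (simp add: agree_def numeral_2_eq_2)
    then show ?thesis using ij by (simp add: ordge_def)
  next
    case False then show ?thesis by (simp add: coef_out)
  qed
qed

lemma agree_comp:
  assumes N: "\<And>c. c < 2 \<Longrightarrow> ordge m (jser N c)" and m: "1 \<le> m"
    and xy: "agree d x y" and dm: "d + m \<le> 5"
  shows "agree (d + m - 1) (jcomp N x) (jcomp N y)"
  unfolding agree_def
proof (intro allI impI)
  fix c :: nat assume c: "c < 2"
  let ?sx = "psubst (jser x 0) (jser x 1) (jser N c)" and ?sy = "psubst (jser y 0) (jser y 1) (jser N c)"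
  have e: "jser (jcomp N x) c - jser (jcomp N y) c =
     (jser (jcomp N x) c - ?sx) + (?sx - ?sy) + (?sy - jser (jcomp N y) c)" by simp
  have o1: "ordge (Suc (d + m - 1)) (jser (jcomp N x) c - ?sx)"
    using jser_jcomp[OF c, of N x] dm by (auto simp: eq5_def intro: ordge_mono)
  have o3: "ordge (Suc (d + m - 1)) (?sy - jser (jcomp N y) c)"
    using eq5_sym[OF jser_jcomp[OF c, of N y]] dm by (auto simp: eq5_def intro: ordge_mono)
  have x0: "ordge (Suc d) (jser x 0 - jser y 0)" and x1: "ordge (Suc d) (jser x 1 - jser y 1)"
    using xy by (auto simp: agree_def)
  have o2: "ordge (Suc (d + m - 1)) (?sx - ?sy)"
    unfolding psubst_diff_XY
  proof (intro ordge_sum)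
    fix p assume "p \<in> deg_le4"
    obtain a b where p: "p = (a,b)" by (cases p)
    show "ordge (Suc (d + m - 1)) (case p of (a, b) \<Rightarrow>
        sconst (scoef (jser N c) a b) * (jser x 0 ^ a * jser x 1 ^ b - jser y 0 ^ a * jser y 1 ^ b))"
    proof (cases "a + b < m")
      case True
      then have "scoef (jser N c) a b = 0" using N[OF c] by (simp add: ordge_def)
      then show ?thesis using p by simp
    next
      case False
      have "ordge (d + (a + b)) (jser x 0 ^ a * jser x 1 ^ b - jser y 0 ^ a * jser y 1 ^ b)"
        by (rule monomial_diff) (use x0 x1 in auto)
      then show ?thesis using p False m by (auto intro: ordge_sconst ordge_mono)
    qed
  qed
  show "ordge (Suc (d + m - 1)) (jser (jcomp N x) c - jser (jcomp N y) c)"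
    unfolding e by (intro ordge_add o1 o2 o3)
qed

text \<open>Write \<open>a = A + N\<close> with \<open>A = jlin a\<close> linear and \<open>N\<close> of order 2.  A right inverse \<open>x\<close> of
  \<open>a\<close> is a fixed point of \<open>x \<mapsto> A\<^sup>-\<^sup>1 (id - N x)\<close>; starting from \<open>A\<^sup>-\<^sup>1\<close>, each step fixes one more
  degree, so three steps reach the fixed point.\<close>
definition jlin :: "jet \<Rightarrow> jet" where
  "jlin a = linjet (L00 a) (L01 a) (L10 a) (L11 a)"
definition jlin_inv :: "jet \<Rightarrow> jet" where
  "jlin_inv a = linjet (L11 a / jdet a) (- L01 a / jdet a) (- L10 a / jdet a) (L00 a / jdet a)"
definition inv_step :: "jet \<Rightarrow> jet \<Rightarrow> jet" where
  "inv_step a x = jcomp (jlin_inv a) (jid - jcomp (a - jlin a) x)"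
definition jinv :: "jet \<Rightarrow> jet" where
  "jinv a = (inv_step a ^^ 3) (jlin_inv a)"

lemma ordge2_nonlinear: "c < 2 \<Longrightarrow> ordge 2 (jser (a - jlin a) c)"
  unfolding ordge_def
proof (intro allI impI)
  fix i j :: nat assume c: "c < 2" and ij: "i + j < 2"
  then have "(i = 0 \<and> j = 0) \<or> (i = 1 \<and> j = 0) \<or> (i = 0 \<and> j = 1)" by auto
  then show "scoef (jser (a - jlin a) c) i j = 0"
    using c by (auto simp: jlin_def coef_linjet less_2_cases_iff L00_def L01_def L10_def L11_def)
qed

lemma jcomp_jlin_jlin_inv: "jdet a \<noteq> 0 \<Longrightarrow> jcomp (jlin a) (jlin_inv a) = jid"
  unfolding jlin_def jlin_inv_def jcomp_linjet_linjet
  by (intro linjet_jid) (simp_all add: field_simps, simp_all add: jdet_def algebra_simps)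

lemma agree_inv_step: "agree d x y \<Longrightarrow> d \<le> 3 \<Longrightarrow> agree (Suc d) (inv_step a x) (inv_step a y)"
proof -
  assume xy: "agree d x y" and d: "d \<le> 3"
  have "agree (d + 2 - 1) (jcomp (a - jlin a) x) (jcomp (a - jlin a) y)"
    by (rule agree_comp[OF ordge2_nonlinear]) (use xy d in auto)
  then have "agree (Suc d) (jid - jcomp (a - jlin a) x) (jid - jcomp (a - jlin a) y)"
    by (intro agree_diff agree_refl) simp
  then have "agree (Suc d + 1 - 1) (inv_step a x) (inv_step a y)"
    unfolding inv_step_def by (intro agree_comp) (use d in auto)
  then show ?thesis by simp
qed

lemma agree_inv_step_start: "agree 1 (jlin_inv a) (inv_step a (jlin_inv a))"
proof -
  have "agree (0 + 2 - 1) (jcomp (a - jlin a) (jlin_inv a)) (jcomp (a - jlin a) 0)"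
    by (rule agree_comp[OF ordge2_nonlinear]) (auto intro: agree_0)
  then have "agree 1 (jid - jcomp (a - jlin a) (jlin_inv a)) (jid - 0)"
    by (intro agree_diff agree_refl) (simp add: jcomp_zero_right)
  then have "agree (1 + 1 - 1) (inv_step a (jlin_inv a)) (jcomp (jlin_inv a) jid)"
    unfolding inv_step_def by (intro agree_comp) auto
  then show ?thesis by (simp add: jcomp_jid_right agree_sym)
qed

lemma agree_iter:
  "k \<le> 3 \<Longrightarrow> agree (Suc k) ((inv_step a ^^ k) (jlin_inv a)) ((inv_step a ^^ Suc k) (jlin_inv a))"
proof (induction k)
  case 0 then show ?case using agree_inv_step_start by simp
next
  case (Suc k)
  then show ?case using agree_inv_step[of "Suc k"] by simp
qed

lemma inv_step_jinv: "inv_step a (jinv a) = jinv a"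
proof -
  have "agree 4 ((inv_step a ^^ 3) (jlin_inv a)) ((inv_step a ^^ Suc 3) (jlin_inv a))"
    using agree_iter[of 3 a] by simp
  then have e: "(inv_step a ^^ 3) (jlin_inv a) = (inv_step a ^^ Suc 3) (jlin_inv a)" by (rule agree_eq)
  have "inv_step a (jinv a) = (inv_step a ^^ Suc 3) (jlin_inv a)"
    unfolding jinv_def by (simp only: funpow.simps(2) comp_apply)
  then show ?thesis using e unfolding jinv_def by (simp only:)
qed

lemma agree1_iter: "k \<le> 3 \<Longrightarrow> agree 1 (jlin_inv a) ((inv_step a ^^ k) (jlin_inv a))"
proof (induction k)
  case 0 then show ?case by (simp add: agree_refl)
next
  case (Suc k)
  have "agree 1 ((inv_step a ^^ k) (jlin_inv a)) ((inv_step a ^^ Suc k) (jlin_inv a))"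
    using agree_mono[OF agree_iter[of k a]] Suc by simp
  then show ?case using Suc by (auto intro: agree_trans)
qed

lemma jinv_right: "jdet a \<noteq> 0 \<Longrightarrow> jcomp a (jinv a) = jid"
proof -
  assume D: "jdet a \<noteq> 0"
  let ?N = "a - jlin a" and ?x = "jinv a"
  have "jcomp a ?x = jcomp (jlin a + ?N) ?x" by simp
  also have "\<dots> = jcomp (jlin a) ?x + jcomp ?N ?x" by (rule jcomp_add_left)
  also have "jcomp (jlin a) ?x = jcomp (jlin a) (inv_step a ?x)" by (simp add: inv_step_jinv)
  also have "\<dots> = jid - jcomp ?N ?x"
    unfolding inv_step_def jcomp_assoc jcomp_jlin_jlin_inv[OF D] jcomp_jid_left ..
  finally show ?thesis by simp
qed

lemma L_jinv[simp]:
  "L00 (jinv a) = L11 a / jdet a" "L01 (jinv a) = - L01 a / jdet a"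
  "L10 (jinv a) = - L10 a / jdet a" "L11 (jinv a) = L00 a / jdet a"
proof -
  have "agree 1 (jlin_inv a) (jinv a)" unfolding jinv_def by (rule agree1_iter) simp
  then have "coef (jinv a) c i j = coef (jlin_inv a) c i j" if "i + j \<le> 1" for c i j
    using agree_coef that by metis
  then show "L00 (jinv a) = L11 a / jdet a" "L01 (jinv a) = - L01 a / jdet a"
    "L10 (jinv a) = - L10 a / jdet a" "L11 (jinv a) = L00 a / jdet a"
    by (simp_all add: L00_def L01_def L10_def L11_def jlin_inv_def coef_linjet)
qed

lemma jdet_jinv: "jdet a \<noteq> 0 \<Longrightarrow> jdet (jinv a) = 1 / jdet a"
  by (simp add: jdet_def[of "jinv a"] field_simps) (simp add: jdet_def algebra_simps)

text \<open>The right inverse is also a left inverse, as in any monoid.\<close>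
lemma jinv_left: "jdet a \<noteq> 0 \<Longrightarrow> jcomp (jinv a) a = jid"
proof -
  assume D: "jdet a \<noteq> 0"
  let ?x = "jinv a"
  have Dx: "jdet ?x \<noteq> 0" using jdet_jinv[OF D] D by simp
  let ?y = "jinv ?x"
  have "a = jcomp a (jcomp ?x ?y)" by (simp add: jinv_right[OF Dx] jcomp_jid_right)
  also have "\<dots> = ?y" by (simp add: jcomp_assoc jinv_right[OF D] jcomp_jid_left)
  finally show ?thesis using jinv_right[OF Dx] by simp
qed

section \<open>Smoothness of rationally defined maps\<close>

text \<open>On open \<open>U\<close> each of
  them is differentiable and its directional derivatives are again of this kind, so they are
  \<open>C\<^sup>\<infinity>\<close>.\<close>
inductive ratfun :: "'a::euclidean_space set \<Rightarrow> ('a \<Rightarrow> real) \<Rightarrow> bool" for U where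
  ratfun_const: "ratfun U (\<lambda>x. c)"
| ratfun_lin: "bounded_linear L \<Longrightarrow> ratfun U L"
| ratfun_add: "ratfun U f \<Longrightarrow> ratfun U g \<Longrightarrow> ratfun U (\<lambda>x. f x + g x)"
| ratfun_mul: "ratfun U f \<Longrightarrow> ratfun U g \<Longrightarrow> ratfun U (\<lambda>x. f x * g x)"
| ratfun_inv: "ratfun U f \<Longrightarrow> (\<forall>x\<in>U. f x \<noteq> 0) \<Longrightarrow> ratfun U (\<lambda>x. inverse (f x))"
| ratfun_cong: "ratfun U f \<Longrightarrow> (\<forall>x\<in>U. f x = g x) \<Longrightarrow> ratfun U g"

lemma ratfun_derivI:
  assumes D: "\<And>x. x \<in> U \<Longrightarrow> (f has_derivative D x) (at x)"
    and R: "\<And>v. ratfun U (\<lambda>x. D x v)"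
  shows "(\<forall>x\<in>U. f differentiable (at x)) \<and> (\<forall>v. ratfun U (\<lambda>x. frechet_derivative f (at x) v))"
proof
  show "\<forall>x\<in>U. f differentiable (at x)" using D by (auto simp: differentiable_def)
  show "\<forall>v. ratfun U (\<lambda>x. frechet_derivative f (at x) v)"
  proof
    fix v
    have "\<forall>x\<in>U. D x v = frechet_derivative f (at x) v"
      using D frechet_derivative_at by metis
    then show "ratfun U (\<lambda>x. frechet_derivative f (at x) v)" by (rule ratfun_cong[OF R])
  qed
qed

lemma ratfun_deriv:
  assumes U: "open U" and f: "ratfun U f"
  shows "(\<forall>x\<in>U. f differentiable (at x)) \<and> (\<forall>v. ratfun U (\<lambda>x. frechet_derivative f (at x) v))"
  using f
proof (induction rule: ratfun.induct)
  case (ratfun_const c)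
  show ?case by (rule ratfun_derivI[where D = "\<lambda>x h. 0"]) (auto intro: ratfun.ratfun_const)
next
  case (ratfun_lin L)
  show ?case
    by (rule ratfun_derivI[where D = "\<lambda>x. L"])
       (auto intro: ratfun.ratfun_const bounded_linear_imp_has_derivative[OF ratfun_lin])
next
  case (ratfun_add f g)
  show ?case
  proof (rule ratfun_derivI[where D = "\<lambda>x h. frechet_derivative f (at x) h + frechet_derivative g (at x) h"])
    show "((\<lambda>x. f x + g x) has_derivative
        (\<lambda>h. frechet_derivative f (at x) h + frechet_derivative g (at x) h)) (at x)" if "x \<in> U" for x
      using ratfun_add.IH that by (intro has_derivative_add) (auto simp: frechet_derivative_works)
  qed (use ratfun_add.IH in \<open>auto intro: ratfun.ratfun_add\<close>)
next
  case (ratfun_mul f g)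
  show ?case
  proof (rule ratfun_derivI[where
        D = "\<lambda>x h. f x * frechet_derivative g (at x) h + frechet_derivative f (at x) h * g x"])
    show "((\<lambda>x. f x * g x) has_derivative
        (\<lambda>h. f x * frechet_derivative g (at x) h + frechet_derivative f (at x) h * g x)) (at x)"
      if "x \<in> U" for x
      using ratfun_mul.IH that by (intro has_derivative_mult) (auto simp: frechet_derivative_works)
    show "ratfun U (\<lambda>x. f x * frechet_derivative g (at x) v + frechet_derivative f (at x) v * g x)"
      for v using ratfun_mul by (intro ratfun.ratfun_add ratfun.ratfun_mul) auto
  qed
next
  case (ratfun_inv f)
  have i: "ratfun U (\<lambda>x. inverse (f x))" using ratfun_inv by (intro ratfun.ratfun_inv) auto
  show ?case
  proof (rule ratfun_derivI[where
        D = "\<lambda>x h. - (inverse (f x) * frechet_derivative f (at x) h * inverse (f x))"])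
    show "((\<lambda>x. inverse (f x)) has_derivative
        (\<lambda>h. - (inverse (f x) * frechet_derivative f (at x) h * inverse (f x)))) (at x)"
      if "x \<in> U" for x
      using ratfun_inv that by (intro Deriv.has_derivative_inverse) (auto simp: frechet_derivative_works)
    show "ratfun U (\<lambda>x. - (inverse (f x) * frechet_derivative f (at x) v * inverse (f x)))" for v
    proof -
      have "ratfun U (\<lambda>x. (-1) * (inverse (f x) * frechet_derivative f (at x) v * inverse (f x)))"
        using ratfun_inv i by (intro ratfun.ratfun_mul ratfun.ratfun_const) auto
      then show ?thesis by (rule ratfun.ratfun_cong) simp
    qed
  qed
next
  case (ratfun_cong f g)
  show ?case
  proof (rule ratfun_derivI[where D = "\<lambda>x. frechet_derivative f (at x)"])
    show "(g has_derivative frechet_derivative f (at x)) (at x)" if x: "x \<in> U" for x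
    proof -
      have "(f has_derivative frechet_derivative f (at x)) (at x)"
        using ratfun_cong.IH x by (simp add: frechet_derivative_works)
      then show ?thesis
        by (rule has_derivative_transform_within_open[OF _ U x]) (use ratfun_cong.hyps(2) in auto)
    qed
  qed (use ratfun_cong.IH in blast)
qed

lemma ratfun_cont: "open U \<Longrightarrow> ratfun U f \<Longrightarrow> continuous_on U f"
proof -
  assume U: "open U" and f: "ratfun U f"
  have "\<forall>x\<in>U. f differentiable (at x)" using ratfun_deriv[OF U f] by blast
  then have "\<forall>x\<in>U. isCont f x" using differentiable_imp_continuous_within by blast
  then show ?thesis by (rule continuous_at_imp_continuous_on)
qed

lemma open_nonzero: "open U \<Longrightarrow> ratfun U d \<Longrightarrow> open {x\<in>U. d x \<noteq> 0}"
proof -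
  assume U: "open U" and d: "ratfun U d"
  have "continuous_on U d" by (rule ratfun_cont[OF U d])
  then have "open (d -` (- {0}) \<inter> U)" using U continuous_on_open_vimage by blast
  moreover have "{x\<in>U. d x \<noteq> 0} = d -` (- {0}) \<inter> U" by auto
  ultimately show ?thesis by simp
qed

lemma ratfun_subset: "ratfun U f \<Longrightarrow> V \<subseteq> U \<Longrightarrow> ratfun V f"
proof (induction rule: ratfun.induct)
  case (ratfun_inv f) then show ?case by (auto intro!: ratfun.ratfun_inv)
next
  case (ratfun_cong f g) then show ?case by (blast intro: ratfun.ratfun_cong)
qed (auto intro: ratfun.intros)

lemma ratfun_diff: "ratfun U f \<Longrightarrow> ratfun U g \<Longrightarrow> ratfun U (\<lambda>x. f x - g x)"
proof -
  assume f: "ratfun U f" and g: "ratfun U g"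
  have "ratfun U (\<lambda>x. f x + (-1) * g x)" by (intro ratfun_add ratfun_mul f g ratfun_const)
  then show ?thesis by (rule ratfun_cong) simp
qed

lemma ratfun_minus: "ratfun U f \<Longrightarrow> ratfun U (\<lambda>x. - f x)"
proof -
  assume f: "ratfun U f"
  have "ratfun U (\<lambda>x. (-1) * f x)" by (intro ratfun_mul f ratfun_const)
  then show ?thesis by (rule ratfun_cong) simp
qed

lemma ratfun_divide: "ratfun U f \<Longrightarrow> ratfun U g \<Longrightarrow> \<forall>x\<in>U. g x \<noteq> 0 \<Longrightarrow> ratfun U (\<lambda>x. f x / g x)"
proof -
  assume f: "ratfun U f" and g: "ratfun U g" and nz: "\<forall>x\<in>U. g x \<noteq> 0"
  have "ratfun U (\<lambda>x. f x * inverse (g x))" by (intro ratfun_mul f ratfun_inv g nz)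
  then show ?thesis by (rule ratfun_cong) (simp add: divide_inverse)
qed

lemma ratfun_sum: "finite A \<Longrightarrow> (\<And>a. a \<in> A \<Longrightarrow> ratfun U (f a)) \<Longrightarrow> ratfun U (\<lambda>x. \<Sum>a\<in>A. f a x)"
proof (induction A rule: finite_induct)
  case empty then show ?case by (simp add: ratfun_const)
next
  case (insert a A)
  have "ratfun U (\<lambda>x. f a x + (\<Sum>a\<in>A. f a x))" using insert by (intro ratfun_add) auto
  then show ?case using insert by simp
qed

lemma ratfun_if: "ratfun U f \<Longrightarrow> ratfun U g \<Longrightarrow> ratfun U (\<lambda>x. if P then f x else g x)"
  by (cases P) auto

definition ratmap :: "'a::euclidean_space set \<Rightarrow> ('a \<Rightarrow> 'b::euclidean_space) \<Rightarrow> bool" where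
  "ratmap U f \<longleftrightarrow> (\<forall>b\<in>Basis. ratfun U (\<lambda>x. f x \<bullet> b))"

text \<open>Differentiability and the derivative are computed coordinatewise, so all iterated
  directional derivatives of a rational map exist and are continuous.\<close>
lemma ratmap_Cdir: "open U \<Longrightarrow> ratmap U f \<Longrightarrow> Cdir vs U f"
proof (induction vs arbitrary: f)
  case Nil then show ?case
    by (simp add: continuous_on_componentwise[of U f] ratfun_cont ratmap_def)
next
  case (Cons v vs)
  have d: "\<forall>x\<in>U. f differentiable (at x)"
    using Cons.prems ratfun_deriv unfolding ratmap_def
    by (subst differentiable_componentwise_within) blast
  have "ratmap U (\<lambda>x. frechet_derivative f (at x) v)"
    unfolding ratmap_def
  proof
    fix b :: 'b assume b: "b \<in> Basis"
    have "\<forall>x\<in>U. frechet_derivative (\<lambda>y. f y \<bullet> b) (at x) v = frechet_derivative f (at x) v \<bullet> b"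
    proof
      fix x assume x: "x \<in> U"
      have "((\<lambda>y. f y \<bullet> b) has_derivative (\<lambda>h. frechet_derivative f (at x) h \<bullet> b)) (at x)"
        using d x by (intro has_derivative_inner_left) (auto simp: frechet_derivative_works)
      then show "frechet_derivative (\<lambda>y. f y \<bullet> b) (at x) v = frechet_derivative f (at x) v \<bullet> b"
        by (simp add: frechet_derivative_at[symmetric])
    qed
    moreover have "ratfun U (\<lambda>x. frechet_derivative (\<lambda>y. f y \<bullet> b) (at x) v)"
      using ratfun_deriv[OF Cons.prems(1)] Cons.prems(2) b by (auto simp: ratmap_def)
    ultimately show "ratfun U (\<lambda>x. frechet_derivative f (at x) v \<bullet> b)"
      by (auto intro: ratfun_cong)
  qed
  then show ?case using d Cons by simp
qed

lemma smooth_mapI: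
  assumes "open V" "S \<subseteq> V" "ratmap V g" "\<And>y. y \<in> S \<Longrightarrow> g y = f y"
  shows "smooth_map S f"
proof -
  have "smooth_on V g" using assms(1,3) by (simp add: smooth_on_def ratmap_Cdir)
  then show ?thesis unfolding smooth_map_def using assms by blast
qed

lemma ratmap_pair: "ratmap U f \<Longrightarrow> ratmap U g \<Longrightarrow> ratmap U (\<lambda>x. (f x, g x))"
  unfolding ratmap_def Basis_prod_def by (auto simp: inner_Pair)

lemma ratmap_vec: "(\<And>k. ratfun U (\<lambda>x. f x $ k)) \<Longrightarrow> ratmap U f"
  unfolding ratmap_def Basis_vec_def by (auto simp: inner_axis)

lemma ratmap_const: "ratmap U (\<lambda>x. c)"
  unfolding ratmap_def by (auto intro: ratfun_const)

definition ratjet :: "'a::euclidean_space set \<Rightarrow> ('a \<Rightarrow> jet) \<Rightarrow> bool" where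
  "ratjet U A \<longleftrightarrow> (\<forall>c i j. ratfun U (\<lambda>x. coef (A x) c i j))"

lemma ratjetD: "ratjet U A \<Longrightarrow> ratfun U (\<lambda>x. coef (A x) c i j)" by (simp add: ratjet_def)

lemma ratjet_ratmap: "ratjet U A \<Longrightarrow> ratmap U A"
proof (rule ratmap_vec)
  fix k assume A: "ratjet U A"
  obtain c i j where r: "Rep_jidx k = (c,i,j)" by (cases "Rep_jidx k") auto
  then have m: "(c,i,j) \<in> jidx_set" using Rep_jidx[of k] by simp
  have "Abs_jidx (c,i,j) = k" using r Rep_jidx_inverse[of k] by simp
  then have "\<forall>x\<in>U. coef (A x) c i j = A x $ k" using m by (simp add: coef_def)
  then show "ratfun U (\<lambda>x. A x $ k)" by (rule ratfun_cong[OF ratjetD[OF A]])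
qed

lemma ratjet_subset: "ratjet U A \<Longrightarrow> V \<subseteq> U \<Longrightarrow> ratjet V A"
  by (auto simp: ratjet_def intro: ratfun_subset)

lemma ratjet_lin: "bounded_linear L \<Longrightarrow> ratjet U L"
  unfolding ratjet_def coef_def
proof (intro allI)
  fix c i j assume L: "bounded_linear L"
  show "ratfun U (\<lambda>x. if (c, i, j) \<in> jidx_set then L x $ Abs_jidx (c, i, j) else 0)"
    by (rule ratfun_if[OF ratfun_lin[OF bounded_linear_compose[OF bounded_linear_vec_nth L]] ratfun_const])
qed

lemma ratjet_const: "ratjet U (\<lambda>x. c)" by (simp add: ratjet_def ratfun_const)

lemma ratjet_diff: "ratjet U A \<Longrightarrow> ratjet U B \<Longrightarrow> ratjet U (\<lambda>x. A x - B x)"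
  by (simp add: ratjet_def ratfun_diff)

lemma ratfun_pmul: "(\<And>i j. ratfun U (\<lambda>x. P x i j)) \<Longrightarrow> (\<And>i j. ratfun U (\<lambda>x. Q x i j)) \<Longrightarrow>
   ratfun U (\<lambda>x. pmul (P x) (Q x) i j)"
  unfolding pmul_def by (intro ratfun_sum ratfun_mul) auto

lemma ratfun_ppow: "(\<And>i j. ratfun U (\<lambda>x. P x i j)) \<Longrightarrow> ratfun U (\<lambda>x. ppow (P x) n i j)"
proof (induction n arbitrary: i j)
  case 0 then show ?case by (simp add: ratfun_const)
next
  case (Suc n) then show ?case by (simp add: ratfun_pmul)
qed

lemma coef_jcomp: "coef (jcomp a b) c i j = (if (c,i,j) \<in> jidx_set then
   (\<Sum>(a',b')\<in>jmonos. coef a c a' b' * pmul (ppow (coef b 0) a') (ppow (coef b 1) b') i j) else 0)"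
  by (simp add: jcomp_def coef_mkjet del: jidx_set_iff)

lemma ratjet_jcomp: "ratjet U A \<Longrightarrow> ratjet U B \<Longrightarrow> ratjet U (\<lambda>x. jcomp (A x) (B x))"
  unfolding ratjet_def coef_jcomp
  by (intro allI ratfun_if ratfun_const ratfun_sum finite_jmonos)
     (auto simp: case_prod_beta intro!: ratfun_mul ratfun_pmul ratfun_ppow)

lemma ratjet_linjet: "ratfun U a \<Longrightarrow> ratfun U b \<Longrightarrow> ratfun U c \<Longrightarrow> ratfun U d \<Longrightarrow>
   ratjet U (\<lambda>x. linjet (a x) (b x) (c x) (d x))"
  unfolding ratjet_def coef_linjet by (intro allI ratfun_if ratfun_const) auto

lemma ratjet_jpair: "ratjet U A \<Longrightarrow> ratjet U B \<Longrightarrow> ratjet U (\<lambda>x. jpair (A x) (B x))"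
  unfolding ratjet_def coef_jpair by (intro allI ratfun_if ratfun_const) auto

lemma ratfun_L: "ratjet U A \<Longrightarrow> ratfun U (\<lambda>x. L00 (A x))" "ratjet U A \<Longrightarrow> ratfun U (\<lambda>x. L01 (A x))"
  "ratjet U A \<Longrightarrow> ratfun U (\<lambda>x. L10 (A x))" "ratjet U A \<Longrightarrow> ratfun U (\<lambda>x. L11 (A x))"
  by (simp_all add: L00_def L01_def L10_def L11_def ratjetD)

lemma ratfun_jdet: "ratjet U A \<Longrightarrow> ratfun U (\<lambda>x. jdet (A x))"
  unfolding jdet_def by (intro ratfun_diff ratfun_mul ratfun_L)

lemma ratjet_jinv: "ratjet U A \<Longrightarrow> \<forall>x\<in>U. jdet (A x) \<noteq> 0 \<Longrightarrow> ratjet U (\<lambda>x. jinv (A x))"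
proof -
  assume A: "ratjet U A" and D: "\<forall>x\<in>U. jdet (A x) \<noteq> 0"
  have lin_inv: "ratjet U (\<lambda>x. jlin_inv (A x))"
    unfolding jlin_inv_def by (intro ratjet_linjet ratfun_divide ratfun_minus ratfun_L ratfun_jdet A D)
  have lin: "ratjet U (\<lambda>x. jlin (A x))"
    unfolding jlin_def by (intro ratjet_linjet ratfun_L A)
  have "ratjet U (\<lambda>x. (inv_step (A x) ^^ n) (jlin_inv (A x)))" for n
  proof (induction n)
    case 0 then show ?case using lin_inv by simp
  next
    case (Suc n) then show ?case
      unfolding funpow.simps comp_def inv_step_def
      by (intro ratjet_jcomp lin_inv ratjet_diff ratjet_const A lin)
  qed
  then show ?thesis by (simp add: jinv_def)
qed

lemma diffeo_betwI:
  assumes hT: "\<And>x. x \<in> S \<Longrightarrow> h x \<in> T" and rS: "\<And>y. y \<in> T \<Longrightarrow> r y \<in> S"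
    and rh: "\<And>x. x \<in> S \<Longrightarrow> r (h x) = x" and hr: "\<And>y. y \<in> T \<Longrightarrow> h (r y) = y"
    and h: "smooth_map S h" and r: "smooth_map T r"
  shows "diffeo_betw S T h"
proof -
  have bij: "bij_betw h S T" by (rule bij_betw_byWitness[of S r]) (use assms in auto)
  have inv: "inv_into S h y = r y" if "y \<in> T" for y
    using bij_betw_imp_inj_on[OF bij] rS[OF that] hr[OF that] by (rule inv_into_f_eq)
  have "smooth_map T (inv_into S h)"
    using r unfolding smooth_map_def by (metis IntD1 inv)
  then show ?thesis using bij h by (simp add: diffeo_betw_def)
qed

section \<open>Local trivialisations of the composition map\<close>

definition jproj :: "jet \<times> jet \<times> jet \<Rightarrow> jet" where
  "jproj e = jcomp (fst e) (jcomp (fst (snd e)) (snd (snd e)))"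

text \<open>\<open>\<phi> \<circ> f \<circ> \<psi>\<close> has linear part \<open>L(\<phi>) e\<^sub>1 e\<^sub>1\<^sup>T L(\<psi>)\<close>, which has rank one.\<close>
lemma jproj_J1:
  assumes "e \<in> Gjet \<times> Njet \<times> Gjet" shows "jproj e \<in> J1"
proof -
  obtain \<phi> f \<psi> where e: "e = (\<phi>, f, \<psi>)" by (cases e) auto
  have \<phi>: "jdet \<phi> \<noteq> 0" and \<psi>: "jdet \<psi> \<noteq> 0" and f: "f \<in> Njet" using assms e by (auto simp: Gjet_iff)
  note fL = Njet_L[OF f]
  let ?g = "jproj e"
  have g: "L00 ?g = L00 \<phi> * L00 \<psi>" "L01 ?g = L00 \<phi> * L01 \<psi>" "L10 ?g = L10 \<phi> * L00 \<psi>" "L11 ?g = L10 \<phi> * L01 \<psi>"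
    using fL by (simp_all add: jproj_def e)
  have "jdet ?g = 0" unfolding jdet_def g by (simp add: algebra_simps)
  moreover have "\<not> (L00 ?g = 0 \<and> L01 ?g = 0 \<and> L10 ?g = 0 \<and> L11 ?g = 0)"
  proof
    assume z: "L00 ?g = 0 \<and> L01 ?g = 0 \<and> L10 ?g = 0 \<and> L11 ?g = 0"
    show False
    proof (cases "L00 \<phi> = 0 \<and> L10 \<phi> = 0")
      case True then show False using \<phi> by (simp add: jdet_def)
    next
      case False
      then have "L00 \<psi> = 0 \<and> L01 \<psi> = 0" using z unfolding g by auto
      then show False using \<psi> by (simp add: jdet_def)
    qed
  qed
  ultimately show ?thesis by (simp add: J1_iff)
qed

lemma ratjet_jproj: "ratjet U (\<lambda>e. jproj e)"
  unfolding jproj_def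
  by (intro ratjet_jcomp ratjet_lin bounded_linear_fst bounded_linear_snd
      bounded_linear_compose[OF bounded_linear_fst bounded_linear_snd]
      bounded_linear_compose[OF bounded_linear_snd bounded_linear_snd])

text \<open>Real identities behind the inverse trivialisation.  If \<open>G\<close> is singular, \<open>c = G v\<close>,
  \<open>n = |c|\<^sup>2 \<noteq> 0\<close>, and \<open>P = [[c0, -c1], [c1, c0]] [[a, b], [0, d]]\<close> with \<open>a d \<noteq> 0\<close>, then \<open>det P = n a d\<close>
  and \<open>P\<^sup>-\<^sup>1 G\<close> has vanishing second row and first row \<open>c\<^sup>T G / (n a)\<close>.\<close>
lemma rank1_identities:
  fixes g00 g01 g10 g11 v1 v2 a b d :: real
  assumes Dg: "g00 * g11 - g01 * g10 = 0"
    and c0: "c0 = g00 * v1 + g01 * v2" and c1: "c1 = g10 * v1 + g11 * v2"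
    and n: "n = c0 * c0 + c1 * c1" "n \<noteq> 0" and a: "a \<noteq> 0" and d: "d \<noteq> 0"
    and p: "p00 = c0 * a" "p01 = c0 * b - c1 * d" "p10 = c1 * a" "p11 = c1 * b + c0 * d"
    and Dp: "Dp = p00 * p11 - p01 * p10"
  shows "Dp = n * a * d"
    "(p11 / Dp) * g00 + (- p01 / Dp) * g10 = (g00 * c0 + g10 * c1) / (n * a)"
    "(p11 / Dp) * g01 + (- p01 / Dp) * g11 = (g01 * c0 + g11 * c1) / (n * a)"
    "(- p10 / Dp) * g00 + (p00 / Dp) * g10 = 0"
    "(- p10 / Dp) * g01 + (p00 / Dp) * g11 = 0"
proof -
  show D: "Dp = n * a * d" unfolding Dp p n by (simp add: algebra_simps)
  text \<open>\<open>c\<close> is proportional to both columns of the singular matrix \<open>G\<close>.\<close>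
  have z1: "c1 * g00 = c0 * g10" and z2: "c1 * g01 = c0 * g11"
    unfolding c0 c1 using Dg by (simp_all add: algebra_simps)
  have comb: "(x / Dp) * u + (y / Dp) * w = (x * u + y * w) / Dp" for x y u w
    by (simp add: add_divide_distrib)
  have e: "p11 * g00 + - p01 * g10 = d * (g00 * c0 + g10 * c1)"
    "p11 * g01 + - p01 * g11 = d * (g01 * c0 + g11 * c1)"
    "- p10 * g00 + p00 * g10 = 0" "- p10 * g01 + p00 * g11 = 0"
    unfolding p using z1 z2 by (simp_all add: algebra_simps)
  show "(p11 / Dp) * g00 + (- p01 / Dp) * g10 = (g00 * c0 + g10 * c1) / (n * a)"
    "(p11 / Dp) * g01 + (- p01 / Dp) * g11 = (g01 * c0 + g11 * c1) / (n * a)"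
    "(- p10 / Dp) * g00 + (p00 / Dp) * g10 = 0"
    "(- p10 / Dp) * g01 + (p00 / Dp) * g11 = 0"
    by (simp_all only: comb e) (use d in \<open>simp_all add: D\<close>)
qed

text \<open>From now on fix a direction \<open>v = (v1, v2)\<close>; the trivialisation is defined over the jets
  \<open>g\<close> with \<open>c = L(g) v \<noteq> 0\<close>.\<close>
context
  fixes v1 v2 :: real
begin

definition colv0 :: "jet \<Rightarrow> real" where "colv0 g = L00 g * v1 + L01 g * v2"
definition colv1 :: "jet \<Rightarrow> real" where "colv1 g = L10 g * v1 + L11 g * v2"
definition colv_sq :: "jet \<Rightarrow> real" where "colv_sq g = colv0 g * colv0 g + colv1 g * colv1 g"
definition rowv0 :: "jet \<Rightarrow> real" where "rowv0 g = L00 g * colv0 g + L10 g * colv1 g"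
definition rowv1 :: "jet \<Rightarrow> real" where "rowv1 g = L01 g * colv0 g + L11 g * colv1 g"
definition rowv_sq :: "jet \<Rightarrow> real" where "rowv_sq g = rowv0 g * rowv0 g + rowv1 g * rowv1 g"

definition conf_col :: "jet \<Rightarrow> jet" where "conf_col g = linjet (colv0 g) (- colv1 g) (colv1 g) (colv0 g)"
definition conf_col_inv :: "jet \<Rightarrow> jet" where
  "conf_col_inv g = linjet (colv0 g / colv_sq g) (colv1 g / colv_sq g) (- colv1 g / colv_sq g) (colv0 g / colv_sq g)"
definition conf_row :: "jet \<Rightarrow> jet" where
  "conf_row g = linjet (rowv0 g / colv_sq g) (rowv1 g / colv_sq g) (- rowv1 g / colv_sq g) (rowv0 g / colv_sq g)"
definition conf_row_inv :: "jet \<Rightarrow> jet" where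
  "conf_row_inv g = linjet (rowv0 g * colv_sq g / rowv_sq g) (- rowv1 g * colv_sq g / rowv_sq g) (rowv1 g * colv_sq g / rowv_sq g) (rowv0 g * colv_sq g / rowv_sq g)"

lemma colv_sq_rowv: "colv_sq g = v1 * rowv0 g + v2 * rowv1 g"
  by (simp add: colv_sq_def rowv0_def rowv1_def colv0_def colv1_def algebra_simps)

text \<open>Since \<open>|c|\<^sup>2 = (c\<^sup>T L(g)) v\<close>, the row is nonzero whenever \<open>c\<close> is.\<close>
lemma rowv_sq_nz: "colv_sq g \<noteq> 0 \<Longrightarrow> rowv_sq g \<noteq> 0"
proof -
  assume n: "colv_sq g \<noteq> 0"
  have "rowv0 g \<noteq> 0 \<or> rowv1 g \<noteq> 0" using n by (auto simp: colv_sq_rowv)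
  then show ?thesis unfolding rowv_sq_def
    using sum_squares_eq_zero_iff by blast
qed

lemma
  assumes n: "colv_sq g \<noteq> 0"
  shows conf_col_inv_left: "jcomp (conf_col_inv g) (conf_col g) = jid"
    and conf_col_inv_right: "jcomp (conf_col g) (conf_col_inv g) = jid"
    and conf_row_inv_right: "jcomp (conf_row g) (conf_row_inv g) = jid"
    and conf_row_inv_left: "jcomp (conf_row_inv g) (conf_row g) = jid"
  using n rowv_sq_nz[OF n]
  unfolding conf_col_inv_def conf_col_def conf_row_def conf_row_inv_def jcomp_linjet_linjet
  by (auto intro!: linjet_jid simp: field_simps) (simp_all add: colv_sq_def rowv_sq_def)

text \<open>The trivialisation \<open>(\<phi>, f, \<psi>) \<mapsto> (g, C\<^sup>-\<^sup>1 \<phi>, 0, (x, \<psi> R\<^sup>-\<^sup>1))\<close> with \<open>g = \<phi> f \<psi>\<close>, \<open>C = conf_col g\<close>,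
  \<open>R = conf_row g\<close>; the zero entry only serves to give the fibre the ambient type of \<open>E\<close>.\<close>
definition triv :: "jet \<times> jet \<times> jet \<Rightarrow> jet \<times> jet \<times> jet \<times> jet" where
  "triv e = (jproj e, jcomp (conf_col_inv (jproj e)) (fst e), 0, jpair jid (jcomp (snd (snd e)) (conf_row_inv (jproj e))))"

text \<open>Its inverse: \<open>\<phi> = C \<phi>\<^sub>0\<close>; then \<open>k = \<phi>\<^sup>-\<^sup>1 g\<close> has vanishing second component up to degree 1,
  \<open>\<psi> = (k\<^sub>1, \<psi>\<^sub>1 R)\<close> and \<open>f = (x, k \<psi>\<^sup>-\<^sup>1)\<close>.\<close>
definition inv_phi :: "jet \<times> jet \<times> jet \<times> jet \<Rightarrow> jet" where
  "inv_phi y = jcomp (conf_col (fst y)) (fst (snd y))"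
definition inv_core :: "jet \<times> jet \<times> jet \<times> jet \<Rightarrow> jet" where
  "inv_core y = jcomp (jinv (inv_phi y)) (fst y)"
definition inv_psi :: "jet \<times> jet \<times> jet \<times> jet \<Rightarrow> jet" where
  "inv_psi y = jpair (inv_core y) (jcomp (snd (snd (snd y))) (conf_row (fst y)))"
definition triv_inv :: "jet \<times> jet \<times> jet \<times> jet \<Rightarrow> jet \<times> jet \<times> jet" where
  "triv_inv y = (inv_phi y, jpair jid (jcomp (inv_core y) (jinv (inv_psi y))), inv_psi y)"

definition chart :: "jet set" where "chart = {g \<in> J1. colv_sq g \<noteq> 0}"
definition fibre :: "(jet \<times> jet \<times> jet) set" where
  "fibre = {(a, z, b). a \<in> Gjet \<and> L10 a = 0 \<and> z = 0 \<and> b \<in> Gjet \<and> jpair jid b = b}"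
definition chart_preim :: "(jet \<times> jet \<times> jet) set" where
  "chart_preim = {e \<in> Gjet \<times> Njet \<times> Gjet. jproj e \<in> chart}"

lemma jdet_conf_col_inv: "colv_sq g \<noteq> 0 \<Longrightarrow> jdet (conf_col_inv g) = 1 / colv_sq g"
  unfolding jdet_def conf_col_inv_def by simp (simp add: field_simps, simp add: colv_sq_def algebra_simps)

lemma colv_rowv_jproj:
  assumes f: "f \<in> Njet" and g: "g = jcomp \<phi> (jcomp f \<psi>)"
  defines "s \<equiv> L00 \<psi> * v1 + L01 \<psi> * v2" and "P \<equiv> L00 \<phi> * L00 \<phi> + L10 \<phi> * L10 \<phi>"
  shows "colv0 g = L00 \<phi> * s" "colv1 g = L10 \<phi> * s" "colv_sq g = s * s * P"
    "rowv0 g = L00 \<psi> * s * P" "rowv1 g = L01 \<psi> * s * P"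
proof -
  have gL: "L00 g = L00 \<phi> * L00 \<psi>" "L01 g = L00 \<phi> * L01 \<psi>" "L10 g = L10 \<phi> * L00 \<psi>" "L11 g = L10 \<phi> * L01 \<psi>"
    using Njet_L[OF f] by (simp_all add: g)
  show c: "colv0 g = L00 \<phi> * s" "colv1 g = L10 \<phi> * s"
    unfolding colv0_def colv1_def gL s_def by (simp_all add: algebra_simps)
  show "colv_sq g = s * s * P" unfolding colv_sq_def c P_def by (simp add: algebra_simps)
  show "rowv0 g = L00 \<psi> * s * P" "rowv1 g = L01 \<psi> * s * P"
    unfolding rowv0_def rowv1_def c gL P_def by (simp_all add: algebra_simps)
qed

lemma triv_in: assumes e: "e \<in> chart_preim" shows "triv e \<in> chart \<times> fibre"
proof -
  obtain \<phi> f \<psi> where ee: "e = (\<phi>, f, \<psi>)" by (cases e) auto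
  have \<phi>: "jdet \<phi> \<noteq> 0" and \<psi>: "jdet \<psi> \<noteq> 0" and f: "f \<in> Njet" and gU: "jproj e \<in> chart"
    using e ee by (auto simp: Gjet_iff chart_preim_def)
  define g where "g = jproj e"
  have n: "colv_sq g \<noteq> 0" using gU by (simp add: g_def chart_def)
  define s where "s = L00 \<psi> * v1 + L01 \<psi> * v2"
  define P where "P = L00 \<phi> * L00 \<phi> + L10 \<phi> * L10 \<phi>"
  have c: "colv0 g = L00 \<phi> * s" "colv1 g = L10 \<phi> * s" and nE: "colv_sq g = s * s * P"
    and o: "rowv0 g = L00 \<psi> * s * P" "rowv1 g = L01 \<psi> * s * P"
    using colv_rowv_jproj[OF f, of g \<phi> \<psi>] by (simp_all add: g_def jproj_def ee s_def P_def)
  have sP: "s * P \<noteq> 0" using n nE by auto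
  have W: "rowv_sq g \<noteq> 0" using rowv_sq_nz[OF n] .
  define \<phi>0 where "\<phi>0 = jcomp (conf_col_inv g) \<phi>"
  define \<psi>1 where "\<psi>1 = jpair jid (jcomp \<psi> (conf_row_inv g))"
  have h: "triv e = (g, \<phi>0, 0, \<psi>1)" by (simp add: triv_def g_def \<phi>0_def \<psi>1_def ee)
  have G0: "\<phi>0 \<in> Gjet" using \<phi> n by (simp add: Gjet_iff \<phi>0_def jdet_jcomp jdet_conf_col_inv)
  have "L10 \<phi>0 = (- colv1 g * L00 \<phi> + colv0 g * L10 \<phi>) / colv_sq g"
    using n by (simp add: \<phi>0_def conf_col_inv_def field_simps)
  also have "\<dots> = 0" unfolding c by (simp add: algebra_simps)
  finally have L0: "L10 \<phi>0 = 0" .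
  have "jdet \<psi>1 = L11 \<psi> * (rowv0 g * colv_sq g / rowv_sq g) + L10 \<psi> * (- rowv1 g * colv_sq g / rowv_sq g)"
    by (simp add: \<psi>1_def jdet_def conf_row_inv_def algebra_simps)
  also have "\<dots> = (s * P) * jdet \<psi> * colv_sq g / rowv_sq g"
    unfolding o jdet_def using W by (simp add: field_simps)
  finally have "jdet \<psi>1 \<noteq> 0" using sP \<psi> n W by simp
  then have G1: "\<psi>1 \<in> Gjet" by (simp add: Gjet_iff)
  have P1: "jpair jid \<psi>1 = \<psi>1" by (simp add: \<psi>1_def jpair_right)
  show ?thesis unfolding h using gU G0 L0 G1 P1 by (simp add: fibre_def g_def)
qed

lemma triv_inv_facts:
  assumes y: "y \<in> chart \<times> fibre"
  shows "jdet (inv_phi y) \<noteq> 0" "L10 (inv_core y) = 0" "L11 (inv_core y) = 0"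
    "jdet (inv_psi y) \<noteq> 0" "jser (inv_psi y) 0 = jser (inv_core y) 0"
    "colv_sq (fst y) \<noteq> 0" "fst y \<in> J1"
proof -
  obtain g \<phi>0 z \<psi>1 where yy: "y = (g, \<phi>0, z, \<psi>1)" by (cases y) auto
  have gU: "g \<in> chart" and G0: "jdet \<phi>0 \<noteq> 0" and L0: "L10 \<phi>0 = 0" and G1: "jdet \<psi>1 \<noteq> 0"
    and P1: "jpair jid \<psi>1 = \<psi>1"
    using y yy by (auto simp: fibre_def Gjet_iff)
  have n: "colv_sq g \<noteq> 0" and gJ: "g \<in> J1" using gU by (auto simp: chart_def)
  show "colv_sq (fst y) \<noteq> 0" "fst y \<in> J1" using n gJ yy by simp_all
  have Dg: "L00 g * L11 g - L01 g * L10 g = 0" using gJ by (simp add: J1_iff jdet_def)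
  have \<psi>1L: "L00 \<psi>1 = 1" "L01 \<psi>1 = 0" using arg_cong[OF P1, of L00] arg_cong[OF P1, of L01] by simp_all
  define a b d where "a = L00 \<phi>0" "b = L01 \<phi>0" "d = L11 \<phi>0"
  have ad: "a \<noteq> 0" "d \<noteq> 0" using G0 L0 by (auto simp: jdet_def a_b_d_def)
  define \<phi> where "\<phi> = inv_phi y"
  have \<phi>L: "L00 \<phi> = colv0 g * a" "L01 \<phi> = colv0 g * b - colv1 g * d"
    "L10 \<phi> = colv1 g * a" "L11 \<phi> = colv1 g * b + colv0 g * d"
    by (simp_all add: \<phi>_def inv_phi_def yy conf_col_def L0 a_b_d_def algebra_simps)
  note alg = rank1_identities[OF Dg colv0_def[of g] colv1_def[of g] colv_sq_def[of g] n ad \<phi>L jdet_def[of \<phi>]]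
  show "jdet (inv_phi y) \<noteq> 0" using alg(1) n ad by (simp add: \<phi>_def)
  have rkE: "inv_core y = jcomp (jinv \<phi>) g" by (simp add: inv_core_def \<phi>_def yy)
  have kL: "L00 (inv_core y) = rowv0 g / (colv_sq g * a)"
    "L01 (inv_core y) = rowv1 g / (colv_sq g * a)"
    "L10 (inv_core y) = 0" "L11 (inv_core y) = 0"
    unfolding rkE using alg(2-5) by (simp_all add: L_jinv rowv0_def rowv1_def)
  show "L10 (inv_core y) = 0" "L11 (inv_core y) = 0" using kL by simp_all
  show "jser (inv_psi y) 0 = jser (inv_core y) 0" by (simp add: inv_psi_def)
  have W: "rowv_sq g \<noteq> 0" using rowv_sq_nz[OF n] .
  have "jdet (inv_psi y) = (rowv0 g / (colv_sq g * a)) *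
      (L10 \<psi>1 * (rowv1 g / colv_sq g) + L11 \<psi>1 * (rowv0 g / colv_sq g))
     - (rowv1 g / (colv_sq g * a)) *
      (L10 \<psi>1 * (rowv0 g / colv_sq g) + L11 \<psi>1 * (- rowv1 g / colv_sq g))"
    unfolding jdet_def using kL by (simp add: inv_psi_def yy conf_row_def)
  also have "\<dots> = L11 \<psi>1 * rowv_sq g / (colv_sq g * colv_sq g * a)"
    using n ad by (simp add: field_simps rowv_sq_def)
  finally show "jdet (inv_psi y) \<noteq> 0" using G1 \<psi>1L W n ad by (simp add: jdet_def)
qed

lemma jproj_triv_inv: assumes y: "y \<in> chart \<times> fibre" shows "jproj (triv_inv y) = fst y"
proof -
  note F = triv_inv_facts[OF y]
  let ?\<phi> = "inv_phi y" and ?k = "inv_core y" and ?\<psi> = "inv_psi y"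
  have "jcomp (jpair jid (jcomp ?k (jinv ?\<psi>))) ?\<psi> = jpair (jcomp jid ?\<psi>) (jcomp (jcomp ?k (jinv ?\<psi>)) ?\<psi>)"
    by (rule jcomp_jpair)
  also have "\<dots> = jpair ?\<psi> ?k"
    by (simp add: jcomp_jid_left flip: jcomp_assoc add: jinv_left[OF F(4)] jcomp_jid_right)
  also have "\<dots> = jpair ?k ?k" by (rule jpair_eq_first[OF F(5)])
  also have "\<dots> = ?k" by (rule jpair_same)
  finally have e: "jcomp (jpair jid (jcomp ?k (jinv ?\<psi>))) ?\<psi> = ?k" .
  have "jproj (triv_inv y) = jcomp ?\<phi> ?k" unfolding jproj_def triv_inv_def fst_conv snd_conv e ..
  also have "\<dots> = fst y" unfolding inv_core_def jcomp_assoc jinv_right[OF F(1)] jcomp_jid_left ..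
  finally show ?thesis .
qed

lemma triv_inv_in: assumes y: "y \<in> chart \<times> fibre" shows "triv_inv y \<in> chart_preim"
proof -
  note F = triv_inv_facts[OF y]
  have f: "jpair jid (jcomp (inv_core y) (jinv (inv_psi y))) \<in> Njet"
    using F by (simp add: Njet_iff jpair_right)
  have "triv_inv y \<in> Gjet \<times> Njet \<times> Gjet" using F f by (simp add: triv_inv_def Gjet_iff)
  moreover have "jproj (triv_inv y) \<in> chart" using jproj_triv_inv[OF y] F by (simp add: chart_def)
  ultimately show ?thesis by (simp add: chart_preim_def)
qed

lemma triv_triv_inv: assumes y: "y \<in> chart \<times> fibre" shows "triv (triv_inv y) = y"
proof -
  obtain g \<phi>0 z \<psi>1 where yy: "y = (g, \<phi>0, z, \<psi>1)" by (cases y) auto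
  have z: "z = 0" and P1: "jpair jid \<psi>1 = \<psi>1" using y yy by (auto simp: fibre_def)
  note F = triv_inv_facts[OF y]
  have n: "colv_sq g \<noteq> 0" using F yy by simp
  have g: "jproj (triv_inv y) = g" using jproj_triv_inv[OF y] yy by simp
  have a: "jcomp (conf_col_inv g) (inv_phi y) = \<phi>0"
    by (simp add: inv_phi_def yy jcomp_assoc conf_col_inv_left[OF n] jcomp_jid_left)
  have b: "jpair jid (jcomp (inv_psi y) (conf_row_inv g)) = \<psi>1"
    by (simp add: inv_psi_def yy jcomp_jpair jpair_right P1 flip: jcomp_assoc add: conf_row_inv_right[OF n] jcomp_jid_right)
  show ?thesis unfolding triv_def g using a b z yy by (simp add: triv_inv_def)
qed

lemma triv_inv_triv: assumes e: "e \<in> chart_preim" shows "triv_inv (triv e) = e"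
proof -
  obtain \<phi> f \<psi> where ee: "e = (\<phi>, f, \<psi>)" by (cases e) auto
  have \<phi>: "jdet \<phi> \<noteq> 0" and \<psi>: "jdet \<psi> \<noteq> 0" and f: "f \<in> Njet" and gU: "jproj e \<in> chart"
    using e ee by (auto simp: Gjet_iff chart_preim_def)
  have fI: "jpair jid f = f" using f by (simp add: Njet_iff)
  define g where "g = jproj e"
  have n: "colv_sq g \<noteq> 0" using gU by (simp add: g_def chart_def)
  let ?y = "triv e"
  have y: "?y = (g, jcomp (conf_col_inv g) \<phi>, 0, jpair jid (jcomp \<psi> (conf_row_inv g)))"
    by (simp add: triv_def g_def ee)
  have r1: "inv_phi ?y = \<phi>"
    by (simp add: y inv_phi_def jcomp_assoc conf_col_inv_right[OF n] jcomp_jid_left)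
  have fy: "fst ?y = g" by (simp add: y)
  have gE: "g = jcomp \<phi> (jcomp f \<psi>)" by (simp add: g_def jproj_def ee)
  have r2: "inv_core ?y = jcomp f \<psi>"
    unfolding inv_core_def r1 fy gE jcomp_assoc jinv_left[OF \<phi>] jcomp_jid_left ..
  have fp: "jcomp f \<psi> = jpair \<psi> (jcomp f \<psi>)"
  proof -
    have "jcomp f \<psi> = jcomp (jpair jid f) \<psi>" using fI by simp
    also have "\<dots> = jpair \<psi> (jcomp f \<psi>)" by (simp add: jcomp_jpair jcomp_jid_left)
    finally show ?thesis .
  qed
  have r3: "inv_psi ?y = \<psi>"
  proof -
    have "inv_psi ?y = jpair (jcomp f \<psi>) (jcomp (jpair jid (jcomp \<psi> (conf_row_inv g))) (conf_row g))"
      unfolding inv_psi_def r2 by (simp add: y)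
    also have "\<dots> = jpair (jcomp f \<psi>) \<psi>"
      by (simp add: jcomp_jpair jpair_right flip: jcomp_assoc add: conf_row_inv_left[OF n] jcomp_jid_right)
    also have "\<dots> = \<psi>" by (subst fp) (simp add: jpair_left jpair_same)
    finally show ?thesis .
  qed
  have r4: "jpair jid (jcomp (inv_core ?y) (jinv (inv_psi ?y))) = f"
    by (simp add: r2 r3 flip: jcomp_assoc add: jinv_right[OF \<psi>] jcomp_jid_right fI)
  show ?thesis unfolding triv_inv_def using r1 r3 r4 ee by simp
qed

lemma ratfun_colv: "ratjet U A \<Longrightarrow> ratfun U (\<lambda>x. colv0 (A x))" "ratjet U A \<Longrightarrow> ratfun U (\<lambda>x. colv1 (A x))"
  unfolding colv0_def colv1_def by (intro ratfun_add ratfun_mul ratfun_L ratfun_const; assumption)+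

lemma ratfun_colv_sq: "ratjet U A \<Longrightarrow> ratfun U (\<lambda>x. colv_sq (A x))"
  unfolding colv_sq_def by (intro ratfun_add ratfun_mul ratfun_colv)

lemma ratfun_rowv: "ratjet U A \<Longrightarrow> ratfun U (\<lambda>x. rowv0 (A x))" "ratjet U A \<Longrightarrow> ratfun U (\<lambda>x. rowv1 (A x))"
  unfolding rowv0_def rowv1_def by (intro ratfun_add ratfun_mul ratfun_L ratfun_colv; assumption)+

lemma ratfun_rowv_sq: "ratjet U A \<Longrightarrow> ratfun U (\<lambda>x. rowv_sq (A x))"
  unfolding rowv_sq_def by (intro ratfun_add ratfun_mul ratfun_rowv)

lemma ratjet_conf_col: "ratjet U A \<Longrightarrow> ratjet U (\<lambda>x. conf_col (A x))"
  unfolding conf_col_def by (intro ratjet_linjet ratfun_colv ratfun_minus)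

lemma ratjet_conf_col_inv: "ratjet U A \<Longrightarrow> \<forall>x\<in>U. colv_sq (A x) \<noteq> 0 \<Longrightarrow> ratjet U (\<lambda>x. conf_col_inv (A x))"
  unfolding conf_col_inv_def by (intro ratjet_linjet ratfun_divide ratfun_colv ratfun_minus ratfun_colv_sq)

lemma ratjet_conf_row: "ratjet U A \<Longrightarrow> \<forall>x\<in>U. colv_sq (A x) \<noteq> 0 \<Longrightarrow> ratjet U (\<lambda>x. conf_row (A x))"
  unfolding conf_row_def by (intro ratjet_linjet ratfun_divide ratfun_rowv ratfun_minus ratfun_colv_sq)

lemma ratjet_conf_row_inv: "ratjet U A \<Longrightarrow> \<forall>x\<in>U. colv_sq (A x) \<noteq> 0 \<Longrightarrow> ratjet U (\<lambda>x. conf_row_inv (A x))"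
  unfolding conf_row_inv_def using rowv_sq_nz
  by (intro ratjet_linjet ratfun_divide ratfun_rowv ratfun_minus ratfun_colv_sq ratfun_rowv_sq ratfun_mul) auto

definition triv_dom :: "(jet \<times> jet \<times> jet) set" where "triv_dom = {e\<in>UNIV. colv_sq (jproj e) \<noteq> 0}"

lemma open_triv_dom: "open triv_dom"
  unfolding triv_dom_def by (intro open_nonzero ratfun_colv_sq ratjet_jproj) simp

lemma ratmap_triv: "ratmap triv_dom triv"
proof -
  have n: "\<forall>x\<in>triv_dom. colv_sq (jproj x) \<noteq> 0" by (simp add: triv_dom_def)
  have j1: "ratjet triv_dom (\<lambda>e. jcomp (conf_col_inv (jproj e)) (fst e))"
    by (intro ratjet_jcomp ratjet_conf_col_inv ratjet_jproj n ratjet_lin bounded_linear_fst)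
  have j2: "ratjet triv_dom (\<lambda>e. jpair jid (jcomp (snd (snd e)) (conf_row_inv (jproj e))))"
    by (intro ratjet_jpair ratjet_const ratjet_jcomp ratjet_conf_row_inv ratjet_jproj n ratjet_lin
        bounded_linear_compose[OF bounded_linear_snd bounded_linear_snd])
  show ?thesis unfolding triv_def
    by (intro ratmap_pair ratjet_ratmap ratjet_jproj j1 j2 ratmap_const)
qed

lemma chart_preim_sub: "chart_preim \<subseteq> triv_dom"
  by (auto simp: chart_preim_def chart_def triv_dom_def)

definition inv_dom0 :: "(jet \<times> jet \<times> jet \<times> jet) set" where
  "inv_dom0 = {y\<in>UNIV. colv_sq (fst y) * jdet (inv_phi y) \<noteq> 0}"

lemma ratjet_inv_phi: "ratjet U inv_phi"
  unfolding inv_phi_def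
  by (intro ratjet_jcomp ratjet_conf_col ratjet_lin bounded_linear_fst
      bounded_linear_compose[OF bounded_linear_fst bounded_linear_snd])

lemma open_inv_dom0: "open inv_dom0"
  unfolding inv_dom0_def
  by (intro open_nonzero open_UNIV ratfun_mul ratfun_colv_sq ratfun_jdet ratjet_inv_phi
      ratjet_lin bounded_linear_fst)

lemma inv_dom0_colv_sq: "\<forall>y\<in>inv_dom0. colv_sq (fst y) \<noteq> 0"
  and inv_dom0_jdet: "\<forall>y\<in>inv_dom0. jdet (inv_phi y) \<noteq> 0"
  by (auto simp: inv_dom0_def)

lemma ratjet_inv_core: "ratjet inv_dom0 inv_core"
  unfolding inv_core_def
  by (intro ratjet_jcomp ratjet_jinv ratjet_inv_phi inv_dom0_jdet ratjet_lin bounded_linear_fst)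

lemma ratjet_inv_psi: "ratjet inv_dom0 inv_psi"
  unfolding inv_psi_def
  by (intro ratjet_jpair ratjet_inv_core ratjet_jcomp ratjet_conf_row inv_dom0_colv_sq ratjet_lin bounded_linear_fst
      bounded_linear_compose[OF bounded_linear_snd bounded_linear_compose[OF bounded_linear_snd bounded_linear_snd]])

definition inv_dom :: "(jet \<times> jet \<times> jet \<times> jet) set" where
  "inv_dom = {y\<in>inv_dom0. jdet (inv_psi y) \<noteq> 0}"

lemma open_inv_dom: "open inv_dom"
  unfolding inv_dom_def by (intro open_nonzero open_inv_dom0 ratfun_jdet ratjet_inv_psi)

lemma ratmap_triv_inv: "ratmap inv_dom triv_inv"
proof -
  have sub: "inv_dom \<subseteq> inv_dom0" by (auto simp: inv_dom_def)
  have D: "\<forall>y\<in>inv_dom. jdet (inv_psi y) \<noteq> 0" by (simp add: inv_dom_def)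
  have a: "ratjet inv_dom inv_phi" by (rule ratjet_inv_phi)
  have b: "ratjet inv_dom (\<lambda>y. jpair jid (jcomp (inv_core y) (jinv (inv_psi y))))"
    by (intro ratjet_jpair ratjet_const ratjet_jcomp ratjet_subset[OF ratjet_inv_core sub] ratjet_jinv ratjet_subset[OF ratjet_inv_psi sub] D)
  have c: "ratjet inv_dom inv_psi" by (rule ratjet_subset[OF ratjet_inv_psi sub])
  show ?thesis unfolding triv_inv_def by (intro ratmap_pair ratjet_ratmap a b c)
qed

lemma chart_fibre_sub: "chart \<times> fibre \<subseteq> inv_dom"
proof
  fix y assume y: "y \<in> chart \<times> fibre"
  note F = triv_inv_facts[OF y]
  show "y \<in> inv_dom" using F by (simp add: inv_dom_def inv_dom0_def)
qed

lemma chart_preim_eq: "(Gjet \<times> Njet \<times> Gjet) \<inter> jproj -` chart = chart_preim"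
  by (auto simp: chart_preim_def)

lemma openin_chart: "openin (top_of_set J1) chart"
proof -
  have "open {g. colv_sq g \<noteq> 0}"
    using open_nonzero[OF open_UNIV ratfun_colv_sq[OF ratjet_lin[OF bounded_linear_ident]]] by simp
  moreover have "chart = J1 \<inter> {g. colv_sq g \<noteq> 0}" by (auto simp: chart_def)
  ultimately show ?thesis using openin_open_Int by metis
qed

lemma diffeo_triv: "diffeo_betw chart_preim (chart \<times> fibre) triv"
proof (rule diffeo_betwI[where r = triv_inv])
  show "smooth_map chart_preim triv"
    by (rule smooth_mapI[OF open_triv_dom chart_preim_sub ratmap_triv]) simp
  show "smooth_map (chart \<times> fibre) triv_inv"
    by (rule smooth_mapI[OF open_inv_dom chart_fibre_sub ratmap_triv_inv]) simp
qed (fact triv_in triv_inv_in triv_inv_triv triv_triv_inv)+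

end

text \<open>A nonzero linear part does not kill both coordinate vectors, so the charts cover \<open>J1\<close>.\<close>
lemma exists_direction: "b \<in> J1 \<Longrightarrow> \<exists>v1 v2. colv_sq v1 v2 b \<noteq> 0"
proof -
  assume b: "b \<in> J1"
  then have nz: "\<not> (L00 b = 0 \<and> L01 b = 0 \<and> L10 b = 0 \<and> L11 b = 0)" by (simp add: J1_iff)
  show ?thesis
  proof (cases "L00 b = 0 \<and> L10 b = 0")
    case True
    then have "colv_sq 0 1 b \<noteq> 0" using nz sum_squares_eq_zero_iff by (auto simp: colv_sq_def colv0_def colv1_def)
    then show ?thesis by blast
  next
    case False
    then have "colv_sq 1 0 b \<noteq> 0" using sum_squares_eq_zero_iff by (auto simp: colv_sq_def colv0_def colv1_def)
    then show ?thesis by blast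
  qed
qed

text \<open>The composition map is onto \<open>J1\<close>: use the inverse trivialisation at \<open>(b, id, 0, id)\<close>.\<close>
lemma jproj_image: "jproj ` (Gjet \<times> Njet \<times> Gjet) = J1"
proof
  show "jproj ` (Gjet \<times> Njet \<times> Gjet) \<subseteq> J1" using jproj_J1 by blast
  show "J1 \<subseteq> jproj ` (Gjet \<times> Njet \<times> Gjet)"
  proof
    fix b assume b: "b \<in> J1"
    obtain v1 v2 where n: "colv_sq v1 v2 b \<noteq> 0" using exists_direction[OF b] by blast
    have y: "(b, jid, 0, jid) \<in> chart v1 v2 \<times> fibre"
      using b n by (simp add: chart_def fibre_def Gjet_iff jdet_def jpair_same)
    have "triv_inv v1 v2 (b, jid, 0, jid) \<in> Gjet \<times> Njet \<times> Gjet"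
      using triv_inv_in[OF y] by (simp add: chart_preim_def)
    moreover have "jproj (triv_inv v1 v2 (b, jid, 0, jid)) = b" using jproj_triv_inv[OF y] by simp
    ultimately show "b \<in> jproj ` (Gjet \<times> Njet \<times> Gjet)" by force
  qed
qed

lemma smooth_jproj: "smooth_map (Gjet \<times> Njet \<times> Gjet) jproj"
  by (rule smooth_mapI[of UNIV]) (auto intro: ratjet_ratmap ratjet_jproj)

theorem lemma2p2:
  shows "fiber_bundle (Gjet \<times> Njet \<times> Gjet) J1
           (\<lambda>(\<phi>, f, \<psi>). jcomp \<phi> (jcomp f \<psi>))"
proof -
  let ?E = "Gjet \<times> Njet \<times> Gjet"
  have proj: "(\<lambda>(\<phi>, f, \<psi>). jcomp \<phi> (jcomp f \<psi>)) = jproj"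
    by (auto simp: jproj_def fun_eq_iff)
  have local_triv: "\<exists>U (F::(jet \<times> jet \<times> jet) set) h. openin (top_of_set J1) U \<and> b \<in> U \<and>
      diffeo_betw (?E \<inter> jproj -` U) (U \<times> F) h \<and> (\<forall>e\<in>?E \<inter> jproj -` U. fst (h e) = jproj e)"
    if b: "b \<in> J1" for b
  proof -
    obtain v1 v2 where n: "colv_sq v1 v2 b \<noteq> 0" using exists_direction[OF b] by blast
    have "b \<in> chart v1 v2" using b n by (simp add: chart_def)
    moreover note openin_chart[of v1 v2] diffeo_triv[of v1 v2, folded chart_preim_eq]
    moreover have "\<forall>e\<in>?E \<inter> jproj -` chart v1 v2. fst (triv v1 v2 e) = jproj e"
      by (simp add: triv_def)
    ultimately show ?thesis
      by (intro exI[of _ "chart v1 v2"] exI[of _ fibre] exI[of _ "triv v1 v2"] conjI)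
  qed
  show ?thesis
    unfolding proj fiber_bundle_def
  proof (intro conjI ballI)
    show "jproj ` ?E = J1" by (rule jproj_image)
    show "smooth_map ?E jproj" by (rule smooth_jproj)
  qed (rule local_triv)
qed

end
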